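(* Let $\Delta$ be a finite abstract simplicial complex of dimension $d\ge1$, with $f^\Delta_d$ its number of $d$-simplices, and let $\rho^{(k)}_\infty$ and $\rho^{(k)}_0$ be zeros of maximal and minimal modulus, respectively, of the $h$-polynomial $h^{\Delta^{(k)}}(z)$ of the $k$-fold barycentric subdivision $\Delta^{(k)}$. Then as $k\to\infty$, $$\rho^{(k)}_\infty\sim -H_{1,d}\,f^\Delta_d\,(d+1)!^k,$$ and $$|\widetilde\chi(\Delta)|=H_{1,d}\,f^\Delta_d\,\bigl|\rho^{(k)}_0\bigr|\,(d+1)!^k\,(1+o(1)),$$ i.e. $|\widetilde\chi(\Delta)|\sim H_{1,d}f^\Delta_d|\rho^{(k)}_0|(d+1)!^k$.
   Context: An abstract simplicial complex $\Delta$ on a finite set is a family of subsets closed under taking subsets (the empty set included); a $d$-simplex is a member of cardinality $d+1$, and $\dim\Delta$ is the largest such $d$. Let $f^\Delta_i$ be the number of $i$-simplices ($f^\Delta_{-1}=1$). The reduced Euler characteristic is $\widetilde\chi(\Delta)=\sum_{\sigma\in\Delta}(-1)^{\#\sigma-1}$. The $h$-polynomial of $\Delta$ (of dimension $d$) is $h^\Delta(z)=\sum_{i=-1}^{d}f^\Delta_i(z-1)^{d-i}$. The barycentric subdivision $\Delta'$ of $\Delta$ is the complex consisting of $\emptyset$ together with all sets $\{\sigma_0,\dots,\sigma_n\}$ ($n\ge0$) of nonempty simplices of $\Delta$ with $\sigma_0\subsetneq\cdots\subsetneq\sigma_n$; $\Delta^{(0)}=\Delta$, $\Delta^{(k+1)}=(\Delta^{(k)})'$.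 $f(k)\sim g(k)$ means $f(k)/g(k)\to1$. For integers $i,d\ge -1$ define $f_{-1,-1}=1$, $f_{-1,d}=0$ for $d\ge0$, $f_{i,-1}=0$ for $i\ge0$, and $f_{i,d}=(i+1)!\,S(d+1,i+1)$ for $i,d\ge0$ ($S$ = Stirling numbers of the second kind). For $d\ge0$ define $F_{d,d}=1$ and recursively for $-1\le i\le d-1$, $F_{i,d}=\frac{1}{(d+1)!-(i+1)!}\sum_{j=i+1}^{d}f_{i,j}F_{j,d}$. Let $F_d(z)=\sum_{i=-1}^dF_{i,d}z^{d-i}$ and $H_d(z)=F_d(z-1)=\sum_{i=0}^{d+1}H_{i,d}z^{d+1-i}$, defining $H_{i,d}$. *)

theory Defs
  imports Complex_Main "HOL-Library.FSet" "HOL-Library.Landau_Symbols"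
    "HOL-Combinatorics.Stirling" "HOL-Computational_Algebra.Polynomial"
begin

definition simplicial_complex :: "'a set set \<Rightarrow> bool" where
  "simplicial_complex \<Delta> \<longleftrightarrow> {} \<in> \<Delta> \<and> (\<forall>\<sigma>\<in>\<Delta>. finite \<sigma>) \<and> (\<forall>\<sigma>\<in>\<Delta>. \<forall>\<tau>. \<tau> \<subseteq> \<sigma> \<longrightarrow> \<tau> \<in> \<Delta>)"

definition cdim :: "'a set set \<Rightarrow> int" where
  "cdim \<Delta> = int (Max (card ` \<Delta>)) - 1"

text \<open>number of simplices with j elements, i.e. f_{j-1}; face_count \<Delta> 0 = f_{-1} = 1\<close>
definition face_count :: "'a set set \<Rightarrow> nat \<Rightarrow> nat" where
  "face_count \<Delta> j = card {\<sigma>\<in>\<Delta>. card \<sigma> = j}"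

definition fvec :: "'a set set \<Rightarrow> int \<Rightarrow> nat" where
  "fvec \<Delta> i = face_count \<Delta> (nat (i + 1))"

definition red_euler_char :: "'a set set \<Rightarrow> int" where
  "red_euler_char \<Delta> = (\<Sum>\<sigma>\<in>\<Delta>. - ((-1) ^ card \<sigma>))"

text \<open>h-polynomial: sum over i = -1..d of f_i (z-1)^(d-i); written with j = i+1, D = d+1\<close>
definition h_poly :: "'a set set \<Rightarrow> complex poly" where
  "h_poly \<Delta> = (let D = Max (card ` \<Delta>) in
     (\<Sum>j\<le>D. of_nat (face_count \<Delta> j) * [:-1, 1:] ^ (D - j)))"

text \<open>Vertices of iterated subdivisions: original vertices, or (nonempty finite) simplices
  of the previous complex.\<close>
datatype 'a bvtx = Atom 'a | Simp "'a bvtx fset"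

definition simp_vtx :: "'a bvtx set \<Rightarrow> 'a bvtx" where
  "simp_vtx \<sigma> = Simp (Abs_fset \<sigma>)"

definition is_chain :: "'b set set \<Rightarrow> bool" where
  "is_chain C \<longleftrightarrow> (\<forall>\<sigma>\<in>C. \<forall>\<tau>\<in>C. \<sigma> \<subseteq> \<tau> \<or> \<tau> \<subseteq> \<sigma>)"

definition bary :: "'a bvtx set set \<Rightarrow> 'a bvtx set set" where
  "bary \<Delta> = {simp_vtx ` C | C. finite C \<and> C \<subseteq> \<Delta> - {{}} \<and> is_chain C}"

definition bary_iter :: "'a set set \<Rightarrow> nat \<Rightarrow> 'a bvtx set set" where
  "bary_iter \<Delta> k = (bary ^^ k) ((\<lambda>\<sigma>. Atom ` \<sigma>) ` \<Delta>)"

definition fnum :: "int \<Rightarrow> int \<Rightarrow> real" where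
  "fnum i d = (if i = -1 \<and> d = -1 then 1
     else if i = -1 \<or> d = -1 then 0
     else fact (nat (i + 1)) * real (Stirling (nat (d + 1)) (nat (i + 1))))"

function Fnum :: "int \<Rightarrow> int \<Rightarrow> real" where
  "Fnum i d = (if d < 0 \<or> i < -1 \<or> i > d then 0
     else if i = d then 1
     else (\<Sum>j\<in>{i+1..d}. fnum i j * Fnum j d) / (fact (nat (d + 1)) - fact (nat (i + 1))))"
  by pat_completeness auto
termination
  by (relation "measure (\<lambda>(i, d). nat (d - i))") auto

definition Fpoly :: "nat \<Rightarrow> real poly" where
  "Fpoly d = (\<Sum>i\<in>{-1..int d}. monom (Fnum i (int d)) (nat (int d - i)))"

definition Hpoly :: "nat \<Rightarrow> real poly" where
  "Hpoly d = pcompose (Fpoly d) [:-1, 1:]"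

text \<open>H_d(z) = sum_{i=0}^{d+1} H_{i,d} z^{d+1-i}\<close>
definition Hnum :: "nat \<Rightarrow> nat \<Rightarrow> real" where
  "Hnum i d = coeff (Hpoly d) (d + 1 - i)"

end

theory Submission
  imports Defs "HOL-Computational_Algebra.Fundamental_Theorem_Algebra"
begin

text \<open>
  A face with j vertices is the top of exactly m! S(j,m) chains of m faces, so barycentric
  subdivision acts on f-vectors by an upper triangular matrix with diagonal entries
  0!, 1!, ..., (d+1)!. Hence f(\<Delta>^(k)) / (d+1)!^k tends to f_d(\<Delta>) times the left eigenvector
  (F_{i,d})_i of the top eigenvalue, and the coefficients of the h-polynomial of \<Delta>^(k), divided
  by (d+1)!^k, tend to those of f_d(\<Delta>) H_d. Meanwhile the h-polynomial stays monic of degree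
  d+1, and its constant term stays (-1)^d \<chi>(\<Delta>) because the alternating face count is invariant
  under subdivision. When the subleading coefficient c of a monic polynomial dominates the lower
  ones on a scale L, its largest root is -c + o(L); applied to the h-polynomial and to its
  reversal this gives \<rho>_\<infinity> and 1/\<rho>_0. Both coefficients of H_d involved equal F_{0,d} > 0.
\<close>

subsection \<open>Ordered set partitions\<close>

definition ord_partitions :: "nat \<Rightarrow> nat \<Rightarrow> nat" where
  "ord_partitions n k = fact k * Stirling n k"

lemma ord_partitions_0_0 [simp]: "ord_partitions 0 0 = 1"
  by (simp add: ord_partitions_def)

lemma ord_partitions_Suc_0 [simp]: "ord_partitions (Suc n) 0 = 0"
  by (simp add: ord_partitions_def)

lemma ord_partitions_0_Suc [simp]: "ord_partitions 0 (Suc k) = 0"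
  by (simp add: ord_partitions_def)

lemma ord_partitions_pos_0: "n \<noteq> 0 \<Longrightarrow> ord_partitions n 0 = 0"
  by (cases n) auto

lemma ord_partitions_eq_0: "n < k \<Longrightarrow> ord_partitions n k = 0"
  by (simp add: ord_partitions_def)

lemma ord_partitions_diag: "ord_partitions n n = fact n"
  by (simp add: ord_partitions_def)

lemma ord_partitions_1: "n \<ge> 1 \<Longrightarrow> ord_partitions n 1 = 1"
  using Stirling_1 by (cases n) (simp_all add: ord_partitions_def)

lemma ord_partitions_Suc_Suc:
  "ord_partitions (Suc n) (Suc k) = Suc k * (ord_partitions n (Suc k) + ord_partitions n k)"
  by (simp add: ord_partitions_def algebra_simps)

text \<open>Choosing the first block of an ordered partition.\<close>
lemma sum_binomial_ord_partitions:
  "(\<Sum>m<n. (n choose m) * ord_partitions m k) = ord_partitions n (Suc k)"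
proof (induction n arbitrary: k)
  case 0
  then show ?case by simp
next
  case (Suc n)
  have split: "(\<Sum>m<Suc n. (Suc n choose m) * ord_partitions m k) =
      (\<Sum>m<Suc n. (n choose m) * ord_partitions m k) + (\<Sum>m<n. (n choose m) * ord_partitions (Suc m) k)"
    by (simp only: sum.lessThan_Suc_shift binomial_Suc_Suc)
      (simp add: sum.distrib algebra_simps)
  have A: "(\<Sum>m<Suc n. (n choose m) * ord_partitions m k) = ord_partitions n (Suc k) + ord_partitions n k"
    using Suc.IH[of k] by simp
  show ?case
  proof (cases k)
    case 0
    then show ?thesis using split A ord_partitions_Suc_Suc[of n 0] by simp
  next
    case (Suc k')
    have "(\<Sum>m<n. (n choose m) * ord_partitions (Suc m) k) =
        (\<Sum>m<n. k * ((n choose m) * ord_partitions m k + (n choose m) * ord_partitions m k'))"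
      using Suc by (simp add: ord_partitions_Suc_Suc algebra_simps)
    also have "\<dots> = k * (ord_partitions n (Suc k) + ord_partitions n k)"
      using Suc.IH[of k] Suc.IH[of k'] Suc by (simp add: sum.distrib sum_distrib_left[symmetric])
    finally show ?thesis using split A ord_partitions_Suc_Suc[of n k] by (simp add: algebra_simps)
  qed
qed

lemma alternating_sum_ord_partitions:
  "j \<le> N \<Longrightarrow> (\<Sum>m\<le>N. (-1::int)^m * int (ord_partitions j m)) = (-1)^j"
proof (induction j arbitrary: N)
  case 0
  have "(\<Sum>m\<le>N. (-1::int)^m * int (ord_partitions 0 m)) = (\<Sum>m\<le>N. if m = 0 then 1 else 0)"
    by (intro sum.cong refl) (auto simp: ord_partitions_eq_0)
  then show ?case by simp
next
  case (Suc j)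
  then obtain N' where N: "N = Suc N'" by (cases N) auto
  have jN: "j \<le> N'" using Suc.prems N by simp
  let ?S = "\<lambda>g. \<Sum>m\<le>N'. (-1::int)^m * (g m * int (ord_partitions j m))"
  have shift: "(\<Sum>m\<le>N'. (-1::int)^m * (int (Suc m) * int (ord_partitions j (Suc m)))) = - ?S int"
  proof -
    have "?S int = (\<Sum>m\<le>Suc N'. (-1::int)^m * (int m * int (ord_partitions j m)))"
      using jN by (simp add: ord_partitions_eq_0)
    also have "\<dots> = - (\<Sum>m\<le>N'. (-1::int)^m * (int (Suc m) * int (ord_partitions j (Suc m))))"
      by (subst sum.atMost_Suc_shift) (simp add: sum_negf[symmetric])
    finally show ?thesis by simp
  qed
  have "(\<Sum>m\<le>N. (-1::int)^m * int (ord_partitions (Suc j) m)) =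
      (\<Sum>m\<le>N'. (-1::int)^(Suc m) * int (ord_partitions (Suc j) (Suc m)))"
    unfolding N by (subst sum.atMost_Suc_shift) simp
  also have "\<dots> = - (\<Sum>m\<le>N'. (-1::int)^m * (int (Suc m) * int (ord_partitions j (Suc m))))
      - ?S (\<lambda>m. int (Suc m))"
    by (simp add: ord_partitions_Suc_Suc sum.distrib[symmetric] sum_negf[symmetric] algebra_simps)
  also have "?S (\<lambda>m. int (Suc m)) = (\<Sum>m\<le>N'. (-1::int)^m * int (ord_partitions j m)) + ?S int"
    by (simp add: sum.distrib[symmetric] algebra_simps)
  finally show ?case using Suc.IH[OF jN] shift by simp
qed

subsection \<open>Chains of faces\<close>

lemma Union_mem_chain:
  assumes "finite C" "C \<noteq> {}" "is_chain C"
  shows "\<Union>C \<in> C"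
  using assms
proof (induction C rule: finite_ne_induct)
  case (singleton x)
  then show ?case by simp
next
  case (insert x F)
  have "is_chain F" using insert.prems by (auto simp: is_chain_def)
  then have "\<Union>F \<in> F" using insert.IH by simp
  moreover have "x \<subseteq> \<Union>F \<or> \<Union>F \<subseteq> x" using calculation insert.prems by (auto simp: is_chain_def)
  ultimately show ?case by (auto simp: Un_absorb1 Un_absorb2)
qed

definition chains_with_top :: "'b set \<Rightarrow> nat \<Rightarrow> 'b set set set" where
  "chains_with_top \<tau> m = {C. C \<subseteq> Pow \<tau> - {{}} \<and> is_chain C \<and> \<tau> \<in> C \<and> card C = m}"

lemma Union_chains_with_top: "C \<in> chains_with_top \<tau> m \<Longrightarrow> \<Union>C = \<tau>"
  by (auto simp: chains_with_top_def)

lemma finite_chains_with_top: "finite \<tau> \<Longrightarrow> finite (chains_with_top \<tau> m)"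
  by (rule finite_subset[of _ "Pow (Pow \<tau>)"]) (auto simp: chains_with_top_def)

lemma chains_with_top_0:
  assumes "finite \<tau>" shows "chains_with_top \<tau> 0 = {}"
proof -
  have "card C > 0" if "C \<subseteq> Pow \<tau>" "\<tau> \<in> C" for C
    using that assms by (subst card_gt_0_iff) (auto intro: finite_subset[of _ "Pow \<tau>"])
  then show ?thesis by (auto simp: chains_with_top_def)
qed

lemma chains_with_top_1: "finite \<tau> \<Longrightarrow> \<tau> \<noteq> {} \<Longrightarrow> chains_with_top \<tau> (Suc 0) = {{\<tau>}}"
  by (auto simp: chains_with_top_def is_chain_def card_Suc_eq)

text \<open>Removing the top of a chain leaves a chain whose top is its union.\<close>
lemma chains_with_top_Suc_Suc:
  assumes "finite \<tau>" "\<tau> \<noteq> {}"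
  shows "chains_with_top \<tau> (Suc (Suc k)) =
    (\<Union>\<sigma>\<in>Pow \<tau> - {{}, \<tau>}. insert \<tau> ` chains_with_top \<sigma> (Suc k))"
proof (intro equalityI subsetI)
  fix C assume C: "C \<in> chains_with_top \<tau> (Suc (Suc k))"
  then have "finite C"
    using assms by (auto simp: chains_with_top_def intro: finite_subset[of _ "Pow \<tau>"])
  define C' where "C' = C - {\<tau>}"
  have C': "card C' = Suc k" "finite C'" "is_chain C'"
    using C \<open>finite C\<close> by (auto simp: chains_with_top_def is_chain_def C'_def)
  then have top: "\<Union>C' \<in> C'" by (intro Union_mem_chain) auto
  have "C' \<subseteq> Pow \<tau> - {{}}" using C by (auto simp: C'_def chains_with_top_def)
  then have "\<Union>C' \<in> Pow \<tau> - {{}, \<tau>}" using top unfolding C'_def by blast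
  moreover have "C' \<in> chains_with_top (\<Union>C') (Suc k)"
    using top C' \<open>C' \<subseteq> Pow \<tau> - {{}}\<close> by (auto simp: chains_with_top_def)
  moreover have "C = insert \<tau> C'" using C by (auto simp: C'_def chains_with_top_def)
  ultimately show "C \<in> (\<Union>\<sigma>\<in>Pow \<tau> - {{}, \<tau>}. insert \<tau> ` chains_with_top \<sigma> (Suc k))" by blast
next
  fix C assume "C \<in> (\<Union>\<sigma>\<in>Pow \<tau> - {{}, \<tau>}. insert \<tau> ` chains_with_top \<sigma> (Suc k))"
  then obtain \<sigma> C' where \<sigma>: "\<sigma> \<subseteq> \<tau>" "\<sigma> \<noteq> {}" "\<sigma> \<noteq> \<tau>"
    and C': "C' \<in> chains_with_top \<sigma> (Suc k)" and C: "C = insert \<tau> C'" by auto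
  have "\<tau> \<notin> C'" using C' \<sigma> by (auto simp: chains_with_top_def)
  moreover have "finite C'" using C' \<sigma> assms
    by (auto simp: chains_with_top_def intro: finite_subset[of _ "Pow \<sigma>"] finite_subset[of \<sigma> \<tau>])
  ultimately show "C \<in> chains_with_top \<tau> (Suc (Suc k))"
    using C' \<sigma> C assms by (auto simp: chains_with_top_def is_chain_def)
qed

lemma card_chains_with_top_Suc_Suc:
  assumes "finite \<tau>" "\<tau> \<noteq> {}"
  shows "card (chains_with_top \<tau> (Suc (Suc k))) =
    (\<Sum>\<sigma>\<in>Pow \<tau> - {{}, \<tau>}. card (chains_with_top \<sigma> (Suc k)))"
proof -
  let ?S = "Pow \<tau> - {{}, \<tau>}"
  have notin: "\<tau> \<notin> C" if "\<sigma> \<in> ?S" "C \<in> chains_with_top \<sigma> (Suc k)" for \<sigma> C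
    using that by (auto simp: chains_with_top_def)
  have inj: "inj_on (insert \<tau>) (chains_with_top \<sigma> (Suc k))" if "\<sigma> \<in> ?S" for \<sigma>
    using notin[OF that] by (intro inj_onI) (metis insert_ident)
  have "card (chains_with_top \<tau> (Suc (Suc k))) =
      (\<Sum>\<sigma>\<in>?S. card (insert \<tau> ` chains_with_top \<sigma> (Suc k)))"
    unfolding chains_with_top_Suc_Suc[OF assms]
  proof (rule card_UN_disjoint)
    show "finite ?S" using assms(1) by simp
    show "\<forall>\<sigma>\<in>?S. finite (insert \<tau> ` chains_with_top \<sigma> (Suc k))"
      using assms(1) by (auto intro!: finite_chains_with_top dest: rev_finite_subset)
    show "\<forall>\<sigma>\<in>?S. \<forall>\<sigma>'\<in>?S. \<sigma> \<noteq> \<sigma>' \<longrightarrow>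
        insert \<tau> ` chains_with_top \<sigma> (Suc k) \<inter> insert \<tau> ` chains_with_top \<sigma>' (Suc k) = {}"
    proof (intro ballI impI equals0I)
      fix \<sigma> \<sigma>' D assume \<sigma>: "\<sigma> \<in> ?S" "\<sigma>' \<in> ?S" "\<sigma> \<noteq> \<sigma>'"
        and "D \<in> insert \<tau> ` chains_with_top \<sigma> (Suc k) \<inter> insert \<tau> ` chains_with_top \<sigma>' (Suc k)"
      then obtain C C' where C: "C \<in> chains_with_top \<sigma> (Suc k)" "C' \<in> chains_with_top \<sigma>' (Suc k)"
        and "insert \<tau> C = insert \<tau> C'" by auto
      then have "C = C'" using notin \<sigma> by (metis insert_ident)
      then show False using C \<sigma>(3) by (auto dest: Union_chains_with_top)
    qed
  qed
  also have "\<dots> = (\<Sum>\<sigma>\<in>?S. card (chains_with_top \<sigma> (Suc k)))"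
    using inj by (intro sum.cong refl card_image)
  finally show ?thesis .
qed

lemma sum_proper_subsets_by_card:
  assumes "finite \<tau>"
  shows "(\<Sum>\<sigma>\<in>Pow \<tau> - {\<tau>}. g (card \<sigma>)) = (\<Sum>m<card \<tau>. (card \<tau> choose m) * g m)"
proof -
  have eq: "Pow \<tau> - {\<tau>} = (\<Union>m<card \<tau>. {\<sigma>. \<sigma> \<subseteq> \<tau> \<and> card \<sigma> = m})"
  proof (intro equalityI subsetI)
    fix \<sigma> assume "\<sigma> \<in> Pow \<tau> - {\<tau>}"
    then show "\<sigma> \<in> (\<Union>m<card \<tau>. {\<sigma>. \<sigma> \<subseteq> \<tau> \<and> card \<sigma> = m})"
      using assms by (auto intro: psubset_card_mono)
  qed auto
  have "(\<Sum>\<sigma>\<in>Pow \<tau> - {\<tau>}. g (card \<sigma>)) = (\<Sum>m<card \<tau>. \<Sum>\<sigma>\<in>{\<sigma>. \<sigma> \<subseteq> \<tau> \<and> card \<sigma> = m}. g (card \<sigma>))"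
    unfolding eq using assms by (intro sum.UNION_disjoint) (auto intro: finite_subset[of _ "Pow \<tau>"])
  also have "\<dots> = (\<Sum>m<card \<tau>. (card \<tau> choose m) * g m)"
    using assms by (intro sum.cong refl) (simp add: n_subsets)
  finally show ?thesis .
qed

lemma card_chains_with_top:
  assumes "finite \<tau>" "\<tau> \<noteq> {}"
  shows "card (chains_with_top \<tau> m) = ord_partitions (card \<tau>) m"
  using assms
proof (induction "card \<tau>" arbitrary: \<tau> m rule: less_induct)
  case less
  have n1: "card \<tau> \<ge> 1" using less.prems by (simp add: Suc_leI card_gt_0_iff)
  consider "m = 0" | "m = Suc 0" | k where "m = Suc (Suc k)"
    by (metis not0_implies_Suc)
  then show ?case
  proof cases
    case 1
    then show ?thesis using less.prems n1 by (simp add: chains_with_top_0 ord_partitions_pos_0)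
  next
    case 2
    then show ?thesis using less.prems ord_partitions_1[OF n1] by (simp add: chains_with_top_1)
  next
    case (3 k)
    have "card (chains_with_top \<tau> m) = (\<Sum>\<sigma>\<in>Pow \<tau> - {{}, \<tau>}. ord_partitions (card \<sigma>) (Suc k))"
      unfolding 3 card_chains_with_top_Suc_Suc[OF less.prems]
    proof (intro sum.cong refl less.hyps)
      fix \<sigma> assume "\<sigma> \<in> Pow \<tau> - {{}, \<tau>}"
      then show "card \<sigma> < card \<tau>" "finite \<sigma>" "\<sigma> \<noteq> {}"
        using less.prems(1) by (auto intro: psubset_card_mono dest: rev_finite_subset)
    qed
    also have "\<dots> = (\<Sum>\<sigma>\<in>Pow \<tau> - {\<tau>}. ord_partitions (card \<sigma>) (Suc k))"
    proof -
      have e: "Pow \<tau> - {{}, \<tau>} = Pow \<tau> - {\<tau>} - {{}}" by blast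
      have "{} \<in> Pow \<tau> - {\<tau>}" using less.prems(2) by blast
      from sum.remove[OF _ this, of "\<lambda>\<sigma>. ord_partitions (card \<sigma>) (Suc k)"]
      show ?thesis unfolding e using less.prems(1) by simp
    qed
    also have "\<dots> = ord_partitions (card \<tau>) m"
      using sum_proper_subsets_by_card[OF less.prems(1), of "\<lambda>j. ord_partitions j (Suc k)"]
        sum_binomial_ord_partitions[of "card \<tau>" "Suc k"] 3 by simp
    finally show ?thesis .
  qed
qed

subsection \<open>The f-vector of the barycentric subdivision\<close>

definition chains_in :: "'b set set \<Rightarrow> nat \<Rightarrow> 'b set set set" where
  "chains_in X m = {C. finite C \<and> C \<subseteq> X - {{}} \<and> is_chain C \<and> card C = m}"

lemma inj_on_simp_vtx: "inj_on simp_vtx {\<sigma>. finite \<sigma>}"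
  by (auto simp: inj_on_def simp_vtx_def Abs_fset_inject)

lemma simplicial_complex_bary:
  assumes "simplicial_complex X"
  shows "simplicial_complex (bary X)"
proof -
  have "\<tau> \<in> bary X" if \<sigma>: "\<sigma> \<in> bary X" and \<tau>: "\<tau> \<subseteq> \<sigma>" for \<sigma> \<tau>
  proof -
    obtain C where C: "\<sigma> = simp_vtx ` C" "finite C" "C \<subseteq> X - {{}}" "is_chain C"
      using \<sigma> unfolding bary_def by blast
    define C' where "C' = {c\<in>C. simp_vtx c \<in> \<tau>}"
    have "\<tau> = simp_vtx ` C'" using \<tau> C by (auto simp: C'_def)
    moreover have "finite C'" "C' \<subseteq> X - {{}}" "is_chain C'"
      using C by (auto simp: C'_def is_chain_def)
    ultimately show ?thesis unfolding bary_def by blast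
  qed
  moreover have "{} \<in> bary X" unfolding bary_def by (auto simp: is_chain_def intro!: exI[of _ "{}"])
  ultimately show ?thesis by (auto simp: simplicial_complex_def bary_def)
qed

lemma finite_bary: "finite X \<Longrightarrow> finite (bary X)"
  by (rule finite_subset[of _ "(\<lambda>C. simp_vtx ` C) ` Pow X"]) (auto simp: bary_def)

lemma face_count_bary_eq_card_chains_in:
  assumes fin: "\<forall>\<sigma>\<in>X. finite \<sigma>"
  shows "face_count (bary X) m = card (chains_in X m)"
proof -
  have inj: "inj_on simp_vtx A" if "A \<subseteq> X" for A
    using that fin by (intro inj_on_subset[OF inj_on_simp_vtx]) auto
  have "{\<sigma> \<in> bary X. card \<sigma> = m} = (\<lambda>C. simp_vtx ` C) ` chains_in X m"
  proof (intro equalityI subsetI)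
    fix \<sigma> assume "\<sigma> \<in> {\<sigma> \<in> bary X. card \<sigma> = m}"
    then obtain C where C: "\<sigma> = simp_vtx ` C" "finite C" "C \<subseteq> X - {{}}" "is_chain C" "card \<sigma> = m"
      unfolding bary_def by blast
    have "inj_on simp_vtx C" using C(3) by (intro inj) blast
    then have "card C = m" using C(1,5) by (simp add: card_image)
    then show "\<sigma> \<in> (\<lambda>C. simp_vtx ` C) ` chains_in X m" using C by (auto simp: chains_in_def)
  next
    fix \<sigma> assume "\<sigma> \<in> (\<lambda>C. simp_vtx ` C) ` chains_in X m"
    then obtain C where C: "\<sigma> = simp_vtx ` C" "C \<in> chains_in X m" by blast
    have "inj_on simp_vtx C" using C(2) by (intro inj) (auto simp: chains_in_def)
    then have "card \<sigma> = m" using C by (simp add: chains_in_def card_image)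
    moreover have "\<sigma> \<in> bary X" using C unfolding bary_def chains_in_def by blast
    ultimately show "\<sigma> \<in> {\<sigma> \<in> bary X. card \<sigma> = m}" by simp
  qed
  moreover have "inj_on (\<lambda>C. simp_vtx ` C) (chains_in X m)"
    by (intro inj_on_image inj) (auto simp: chains_in_def)
  ultimately show ?thesis unfolding face_count_def by (simp add: card_image)
qed

lemma chains_in_Suc:
  assumes "simplicial_complex X"
  shows "chains_in X (Suc m) = (\<Union>\<tau>\<in>X. chains_with_top \<tau> (Suc m))"
proof (intro equalityI subsetI)
  fix C assume C: "C \<in> chains_in X (Suc m)"
  then have "\<Union>C \<in> C" by (intro Union_mem_chain) (auto simp: chains_in_def)
  then show "C \<in> (\<Union>\<tau>\<in>X. chains_with_top \<tau> (Suc m))"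
    using C by (auto simp: chains_in_def chains_with_top_def)
next
  fix C assume "C \<in> (\<Union>\<tau>\<in>X. chains_with_top \<tau> (Suc m))"
  then obtain \<tau> where \<tau>: "\<tau> \<in> X" "C \<in> chains_with_top \<tau> (Suc m)" by auto
  then have "finite C" using assms
    by (auto simp: chains_with_top_def simplicial_complex_def intro: finite_subset[of C "Pow \<tau>"])
  then show "C \<in> chains_in X (Suc m)"
    using \<tau> assms by (auto simp: chains_with_top_def chains_in_def simplicial_complex_def)
qed

lemma card_chains_in:
  assumes "simplicial_complex X" "finite X"
  shows "card (chains_in X m) = (\<Sum>\<sigma>\<in>X. ord_partitions (card \<sigma>) m)"
proof (cases m)
  case 0
  have fin: "\<forall>\<sigma>\<in>X. finite \<sigma>" "{} \<in> X" using assms by (simp_all add: simplicial_complex_def)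
  have "(\<Sum>\<sigma>\<in>X. ord_partitions (card \<sigma>) 0) =
      ord_partitions 0 0 + (\<Sum>\<sigma>\<in>X - {{}}. ord_partitions (card \<sigma>) 0)"
    using assms(2) fin(2) by (simp add: sum.remove)
  also have "(\<Sum>\<sigma>\<in>X - {{}}. ord_partitions (card \<sigma>) 0) = 0"
    using fin by (intro sum.neutral ballI ord_partitions_pos_0) auto
  moreover have "chains_in X 0 = {{}}" by (auto simp: chains_in_def is_chain_def)
  ultimately show ?thesis using 0 by simp
next
  case (Suc m')
  have fin: "\<forall>\<sigma>\<in>X. finite \<sigma>" using assms by (simp add: simplicial_complex_def)
  have "card (chains_in X m) = (\<Sum>\<tau>\<in>X. card (chains_with_top \<tau> m))"
    unfolding Suc chains_in_Suc[OF assms(1)] using assms(2) fin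
    by (intro card_UN_disjoint) (auto intro: finite_chains_with_top dest: Union_chains_with_top)
  also have "\<dots> = (\<Sum>\<tau>\<in>X. ord_partitions (card \<tau>) m)"
  proof (intro sum.cong refl)
    fix \<tau> assume "\<tau> \<in> X"
    show "card (chains_with_top \<tau> m) = ord_partitions (card \<tau>) m"
    proof (cases "\<tau> = {}")
      case True
      then show ?thesis using Suc by (simp add: chains_with_top_def)
    next
      case False
      then show ?thesis using fin \<open>\<tau> \<in> X\<close> by (simp add: card_chains_with_top)
    qed
  qed
  finally show ?thesis .
qed

lemma face_count_bary:
  assumes "simplicial_complex X" "finite X"
  shows "face_count (bary X) m = (\<Sum>\<sigma>\<in>X. ord_partitions (card \<sigma>) m)"
  using assms by (simp add: face_count_bary_eq_card_chains_in card_chains_in simplicial_complex_def)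

lemma sum_card_eq_face_count_sum:
  assumes "finite X" "\<forall>\<sigma>\<in>X. card \<sigma> \<le> N"
  shows "(\<Sum>\<sigma>\<in>X. g (card \<sigma>)) = (\<Sum>j\<le>N. of_nat (face_count X j) * g j)"
proof -
  have "(\<Sum>\<sigma>\<in>X. g (card \<sigma>)) = (\<Sum>\<sigma>\<in>X. \<Sum>j\<le>N. if card \<sigma> = j then g j else 0)"
    using assms(2) by (intro sum.cong refl) (simp add: sum.delta)
  also have "\<dots> = (\<Sum>j\<le>N. \<Sum>\<sigma>\<in>X. if card \<sigma> = j then g j else 0)"
    by (rule sum.swap)
  also have "\<dots> = (\<Sum>j\<le>N. of_nat (face_count X j) * g j)"
  proof (intro sum.cong refl)
    fix j
    have "(\<Sum>\<sigma>\<in>X. if card \<sigma> = j then g j else 0) = (\<Sum>\<sigma>\<in>{\<sigma>\<in>X. card \<sigma> = j}. g j)"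
      using assms(1) by (rule sum.inter_filter[symmetric])
    then show "(\<Sum>\<sigma>\<in>X. if card \<sigma> = j then g j else 0) = of_nat (face_count X j) * g j"
      by (simp add: face_count_def)
  qed
  finally show ?thesis .
qed

definition max_face_card :: "'b set set \<Rightarrow> nat \<Rightarrow> bool" where
  "max_face_card X D \<longleftrightarrow> (\<forall>\<sigma>\<in>X. card \<sigma> \<le> D) \<and> (\<exists>\<sigma>\<in>X. card \<sigma> = D)"

lemma Max_card_eq: "finite X \<Longrightarrow> max_face_card X D \<Longrightarrow> Max (card ` X) = D"
  unfolding max_face_card_def by (intro Max_eqI) auto

lemma max_face_card_of_cdim:
  assumes "simplicial_complex \<Delta>" "finite \<Delta>" "cdim \<Delta> = int d"
  shows "max_face_card \<Delta> (Suc d)"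
proof -
  have Max: "Max (card ` \<Delta>) = Suc d" using assms(3) by (simp add: cdim_def)
  have "card ` \<Delta> \<noteq> {}" using assms(1) by (auto simp: simplicial_complex_def)
  then have "Suc d \<in> card ` \<Delta>" using Max_in[of "card ` \<Delta>"] assms(2) Max by simp
  moreover have "card \<sigma> \<le> Suc d" if "\<sigma> \<in> \<Delta>" for \<sigma>
    using that assms(2) Max Max_ge[of "card ` \<Delta>" "card \<sigma>"] by simp
  ultimately show ?thesis by (auto simp: max_face_card_def)
qed

lemma max_face_card_bary:
  assumes "simplicial_complex X" "finite X" "max_face_card X D"
  shows "max_face_card (bary X) D"
proof -
  have fc: "face_count (bary X) m = (\<Sum>\<sigma>\<in>X. ord_partitions (card \<sigma>) m)" for m
    using face_count_bary[OF assms(1,2)] .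
  have "card \<sigma> \<le> D" if "\<sigma> \<in> bary X" for \<sigma>
  proof (rule ccontr)
    assume "\<not> card \<sigma> \<le> D"
    then have "face_count (bary X) (card \<sigma>) = 0"
      using assms(3) unfolding fc max_face_card_def by (intro sum.neutral) (auto intro!: ord_partitions_eq_0)
    then show False using that finite_bary[OF assms(2)] by (auto simp: face_count_def)
  qed
  moreover have "\<exists>\<sigma>\<in>bary X. card \<sigma> = D"
  proof -
    obtain \<tau> where \<tau>: "\<tau> \<in> X" "card \<tau> = D" using assms(3) by (auto simp: max_face_card_def)
    have "0 < ord_partitions D D" by (simp add: ord_partitions_diag)
    also have "\<dots> \<le> face_count (bary X) D"
      unfolding fc using \<tau> assms(2) member_le_sum[of \<tau> X "\<lambda>\<sigma>. ord_partitions (card \<sigma>) D"] by simp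
    finally have "{\<sigma>\<in>bary X. card \<sigma> = D} \<noteq> {}"
      unfolding face_count_def by (metis card.empty less_irrefl)
    then show ?thesis by blast
  qed
  ultimately show ?thesis by (simp add: max_face_card_def)
qed

lemma face_count_pos_of_max_face_card: "finite X \<Longrightarrow> max_face_card X D \<Longrightarrow> face_count X D > 0"
  by (auto simp: max_face_card_def face_count_def card_gt_0_iff)

lemma bary_iter_0: "bary_iter \<Delta> 0 = (\<lambda>\<sigma>. Atom ` \<sigma>) ` \<Delta>"
  by (simp add: bary_iter_def)

lemma bary_iter_Suc: "bary_iter \<Delta> (Suc k) = bary (bary_iter \<Delta> k)"
  by (simp add: bary_iter_def)

lemma card_image_Atom [simp]: "card (Atom ` \<sigma>) = card \<sigma>"
  by (rule card_image) (simp add: inj_on_def)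

lemma face_count_bary_iter_0: "face_count (bary_iter \<Delta> 0) j = face_count \<Delta> j"
proof -
  have "{\<sigma> \<in> bary_iter \<Delta> 0. card \<sigma> = j} = (\<lambda>\<sigma>. Atom ` \<sigma>) ` {\<sigma>\<in>\<Delta>. card \<sigma> = j}"
    unfolding bary_iter_0 by auto
  moreover have "inj_on (\<lambda>\<sigma>. Atom ` \<sigma>) A" for A :: "'a set set"
    by (rule inj_on_image) (auto simp: inj_on_def)
  ultimately show ?thesis unfolding face_count_def by (simp add: card_image)
qed

lemma simplicial_complex_bary_iter_0:
  assumes "simplicial_complex \<Delta>"
  shows "simplicial_complex (bary_iter \<Delta> 0)"
  unfolding bary_iter_0 simplicial_complex_def
proof (intro conjI ballI allI impI)
  show "{} \<in> (\<lambda>\<sigma>. Atom ` \<sigma>) ` \<Delta>" using assms by (force simp: simplicial_complex_def)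
next
  fix \<sigma> assume "\<sigma> \<in> (\<lambda>\<sigma>. Atom ` \<sigma>) ` \<Delta>"
  then show "finite \<sigma>" using assms by (auto simp: simplicial_complex_def)
next
  fix \<sigma> \<tau> assume "\<sigma> \<in> (\<lambda>\<sigma>. Atom ` \<sigma>) ` \<Delta>" "\<tau> \<subseteq> \<sigma>"
  then obtain \<sigma>0 where "\<sigma>0 \<in> \<Delta>" "\<sigma> = Atom ` \<sigma>0" "\<tau> \<subseteq> \<sigma>" by auto
  then have "{x\<in>\<sigma>0. Atom x \<in> \<tau>} \<in> \<Delta>" "\<tau> = Atom ` {x\<in>\<sigma>0. Atom x \<in> \<tau>}"
    using assms by (auto simp: simplicial_complex_def)
  then show "\<tau> \<in> (\<lambda>\<sigma>. Atom ` \<sigma>) ` \<Delta>" by blast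
qed

lemma bary_iter_complex:
  assumes "simplicial_complex \<Delta>" "finite \<Delta>" "max_face_card \<Delta> D"
  shows "simplicial_complex (bary_iter \<Delta> k) \<and> finite (bary_iter \<Delta> k) \<and> max_face_card (bary_iter \<Delta> k) D"
proof (induction k)
  case 0
  have "max_face_card (bary_iter \<Delta> 0) D"
    using assms(3) unfolding bary_iter_0 max_face_card_def by auto
  then show ?case using simplicial_complex_bary_iter_0[OF assms(1)] assms(2) by (simp add: bary_iter_0)
next
  case (Suc k)
  then show ?case
    unfolding bary_iter_Suc using simplicial_complex_bary finite_bary max_face_card_bary by blast
qed

lemma face_count_bary_iter_Suc:
  assumes "simplicial_complex \<Delta>" "finite \<Delta>" "max_face_card \<Delta> D"
  shows "face_count (bary_iter \<Delta> (Suc k)) m =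
    (\<Sum>j\<le>D. face_count (bary_iter \<Delta> k) j * ord_partitions j m)"
proof -
  have P: "simplicial_complex (bary_iter \<Delta> k)" "finite (bary_iter \<Delta> k)"
    "max_face_card (bary_iter \<Delta> k) D"
    using bary_iter_complex[OF assms] by auto
  show ?thesis unfolding bary_iter_Suc face_count_bary[OF P(1,2)]
    using sum_card_eq_face_count_sum[OF P(2), of D "\<lambda>j. ord_partitions j m"] P(3)
    by (simp add: max_face_card_def)
qed

lemma sum_atMost_split_at:
  fixes f :: "nat \<Rightarrow> 'b::comm_monoid_add"
  assumes "m \<le> N"
  shows "(\<Sum>j\<le>N. f j) = (\<Sum>j<m. f j) + f m + (\<Sum>j\<in>{m<..N}. f j)"
proof -
  have e1: "{..N} = {..<m} \<union> {m..N}" using assms by auto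
  have e2: "{m..N} = insert m {m<..N}" using assms by auto
  have "(\<Sum>j\<le>N. f j) = (\<Sum>j<m. f j) + (\<Sum>j\<in>{m..N}. f j)"
    unfolding e1 by (rule sum.union_disjoint) auto
  also have "(\<Sum>j\<in>{m..N}. f j) = f m + (\<Sum>j\<in>{m<..N}. f j)"
    unfolding e2 by (rule sum.insert) auto
  finally show ?thesis by (simp add: add.assoc)
qed

lemma face_count_bary_iter_Suc_triangular:
  assumes "simplicial_complex \<Delta>" "finite \<Delta>" "max_face_card \<Delta> D" "m \<le> D"
  shows "face_count (bary_iter \<Delta> (Suc k)) m = fact m * face_count (bary_iter \<Delta> k) m +
    (\<Sum>j\<in>{m<..D}. face_count (bary_iter \<Delta> k) j * ord_partitions j m)"
  unfolding face_count_bary_iter_Suc[OF assms(1-3)] sum_atMost_split_at[OF assms(4)]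
  by (simp add: ord_partitions_eq_0 ord_partitions_diag)

lemma face_count_bary_iter_empty:
  assumes "simplicial_complex \<Delta>" "finite \<Delta>" "max_face_card \<Delta> D"
  shows "face_count (bary_iter \<Delta> k) 0 = 1"
proof -
  have "{\<sigma> \<in> bary_iter \<Delta> k. card \<sigma> = 0} = {{}}"
    using bary_iter_complex[OF assms] by (auto simp: simplicial_complex_def)
  then show ?thesis by (simp add: face_count_def)
qed

lemma face_count_bary_iter_top:
  assumes "simplicial_complex \<Delta>" "finite \<Delta>" "max_face_card \<Delta> D"
  shows "face_count (bary_iter \<Delta> k) D = fact D ^ k * face_count \<Delta> D"
  by (induction k) (simp_all add: face_count_bary_iter_Suc_triangular[OF assms order.refl]
      face_count_bary_iter_0)

lemma alternating_face_count_bary_iter: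
  assumes "simplicial_complex \<Delta>" "finite \<Delta>" "max_face_card \<Delta> D"
  shows "(\<Sum>m\<le>D. (-1::int)^m * int (face_count (bary_iter \<Delta> k) m)) =
    (\<Sum>m\<le>D. (-1::int)^m * int (face_count \<Delta> m))"
proof (induction k)
  case 0
  then show ?case by (simp add: face_count_bary_iter_0)
next
  case (Suc k)
  have "(\<Sum>m\<le>D. (-1::int)^m * int (face_count (bary_iter \<Delta> (Suc k)) m)) =
      (\<Sum>m\<le>D. \<Sum>j\<le>D. int (face_count (bary_iter \<Delta> k) j) * ((-1::int)^m * int (ord_partitions j m)))"
    unfolding face_count_bary_iter_Suc[OF assms] by (simp add: sum_distrib_left algebra_simps)
  also have "\<dots> = (\<Sum>j\<le>D. int (face_count (bary_iter \<Delta> k) j) *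
      (\<Sum>m\<le>D. (-1::int)^m * int (ord_partitions j m)))"
    by (subst sum.swap) (simp add: sum_distrib_left)
  also have "\<dots> = (\<Sum>j\<le>D. (-1::int)^j * int (face_count (bary_iter \<Delta> k) j))"
    by (intro sum.cong refl) (simp add: alternating_sum_ord_partitions)
  finally show ?case using Suc.IH by simp
qed

lemma red_euler_char_eq_alternating_sum:
  assumes "finite \<Delta>" "max_face_card \<Delta> D"
  shows "red_euler_char \<Delta> = - (\<Sum>m\<le>D. (-1::int)^m * int (face_count \<Delta> m))"
proof -
  have "red_euler_char \<Delta> = (\<Sum>\<sigma>\<in>\<Delta>. (\<lambda>j. - ((-1::int)^j)) (card \<sigma>))"
    by (simp add: red_euler_char_def)
  also have "\<dots> = (\<Sum>j\<le>D. of_nat (face_count \<Delta> j) * - ((-1::int)^j))"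
    using assms by (intro sum_card_eq_face_count_sum) (auto simp: max_face_card_def)
  finally show ?thesis by (simp add: sum_negf algebra_simps)
qed

subsection \<open>The top eigenvector of the subdivision matrix\<close>

declare Fnum.simps [simp del]

text \<open>\<open>Fvec d m\<close> is F_{m-1,d}: it is indexed by face cardinality rather than dimension.\<close>
definition Fvec :: "nat \<Rightarrow> nat \<Rightarrow> real" where
  "Fvec d m = Fnum (int m - 1) (int d)"

lemma fnum_eq_ord_partitions:
  assumes "j \<ge> 1"
  shows "fnum (int m - 1) (int j - 1) = real (ord_partitions j m)"
proof (cases m)
  case 0
  then show ?thesis using assms by (cases j) (auto simp: fnum_def ord_partitions_def)
next
  case (Suc n)
  have a: "nat (int n + 1) = Suc n" by simp
  have b: "nat (int j - 1 + 1) = j" using assms by simp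
  have "fnum (int m - 1) (int j - 1) =
      fact (nat (int n + 1)) * real (Stirling (nat (int j - 1 + 1)) (nat (int n + 1)))"
    unfolding fnum_def using Suc assms by simp
  then show ?thesis unfolding a b by (simp add: ord_partitions_def Suc algebra_simps)
qed

lemma fact_less_fact_Suc:
  assumes "d \<ge> 1" "m < Suc d"
  shows "(fact m :: real) < fact (Suc d)"
proof (cases "m = 0")
  case True
  have "(fact 1 :: real) < fact (Suc d)" using assms by (intro fact_less_mono) auto
  then show ?thesis using True by simp
next
  case False
  then show ?thesis using assms by (intro fact_less_mono) auto
qed

lemma Fvec_top: "Fvec d (Suc d) = 1"
  unfolding Fvec_def by (subst Fnum.simps) simp

lemma Fvec_rec:
  assumes "d \<ge> 1" "m < Suc d"
  shows "Fvec d m * (fact (Suc d) - fact m) = (\<Sum>j\<in>{m<..Suc d}. real (ord_partitions j m) * Fvec d j)"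
proof -
  have "Fvec d m = (\<Sum>j\<in>{int m - 1 + 1..int d}. fnum (int m - 1) j * Fnum j (int d)) /
      (fact (nat (int d + 1)) - fact (nat (int m - 1 + 1)))"
    unfolding Fvec_def using assms by (subst Fnum.simps) simp
  also have "nat (int d + 1) = Suc d" by simp
  also have "nat (int m - 1 + 1) = m" by simp
  also have "(\<Sum>j\<in>{int m - 1 + 1..int d}. fnum (int m - 1) j * Fnum j (int d)) =
      (\<Sum>j\<in>{m<..Suc d}. real (ord_partitions j m) * Fvec d j)"
  proof (rule sum.reindex_bij_witness[of _ "\<lambda>j. int j - 1" "\<lambda>j. nat (j + 1)"])
    fix a assume a: "a \<in> {int m - 1 + 1..int d}"
    then show "int (nat (a + 1)) - 1 = a" "nat (a + 1) \<in> {m<..Suc d}" by auto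
    have "nat (a + 1) \<ge> 1" "int (nat (a + 1)) - 1 = a" using a by auto
    then show "real (ord_partitions (nat (a + 1)) m) * Fvec d (nat (a + 1)) = fnum (int m - 1) a * Fnum a (int d)"
      using fnum_eq_ord_partitions[of "nat (a + 1)" m] by (simp add: Fvec_def)
  qed auto
  finally have "Fvec d m = (\<Sum>j\<in>{m<..Suc d}. real (ord_partitions j m) * Fvec d j) / (fact (Suc d) - fact m)" .
  moreover have "(fact (Suc d) :: real) - fact m \<noteq> 0" using fact_less_fact_Suc[OF assms] by simp
  ultimately show ?thesis by simp
qed

lemma Fvec_0: "d \<ge> 1 \<Longrightarrow> Fvec d 0 = 0"
  using Fvec_rec[of d 0] fact_less_fact_Suc[of d 0] by (simp add: ord_partitions_pos_0)

lemma Fvec_eigenvector: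
  assumes "d \<ge> 1" "m \<le> Suc d"
  shows "fact (Suc d) * Fvec d m = (\<Sum>j\<le>Suc d. real (ord_partitions j m) * Fvec d j)"
proof -
  have "(\<Sum>j\<le>Suc d. real (ord_partitions j m) * Fvec d j) =
      fact m * Fvec d m + (\<Sum>j\<in>{m<..Suc d}. real (ord_partitions j m) * Fvec d j)"
    unfolding sum_atMost_split_at[OF assms(2)] by (simp add: ord_partitions_eq_0 ord_partitions_diag)
  then show ?thesis
    using Fvec_rec[OF assms(1), of m] assms(2) by (cases "m = Suc d") (auto simp: Fvec_top algebra_simps)
qed

text \<open>The top eigenvalue \<open>(d+1)!\<close> is simple, since the other diagonal entries are smaller.\<close>
lemma left_eigenvector_unique:
  assumes "d \<ge> 1" "\<forall>m\<le>Suc d. fact (Suc d) * G m = (\<Sum>j\<le>Suc d. real (ord_partitions j m) * G j)"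
  shows "m \<le> Suc d \<Longrightarrow> G m = G (Suc d) * Fvec d m"
proof (induction "Suc d - m" arbitrary: m rule: less_induct)
  case less
  show ?case
  proof (cases "m = Suc d")
    case True
    then show ?thesis by (simp add: Fvec_top)
  next
    case False
    then have m: "m < Suc d" using less.prems by simp
    have "fact (Suc d) * G m = (\<Sum>j\<le>Suc d. real (ord_partitions j m) * G j)"
      using assms(2) m by simp
    also have "\<dots> = fact m * G m + (\<Sum>j\<in>{m<..Suc d}. real (ord_partitions j m) * G j)"
      unfolding sum_atMost_split_at[OF less.prems] by (simp add: ord_partitions_eq_0 ord_partitions_diag)
    also have "(\<Sum>j\<in>{m<..Suc d}. real (ord_partitions j m) * G j) =
        (\<Sum>j\<in>{m<..Suc d}. real (ord_partitions j m) * (G (Suc d) * Fvec d j))"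
      by (intro sum.cong refl arg_cong[where f = "\<lambda>x. _ * x"] less.hyps) auto
    also have "\<dots> = G (Suc d) * (\<Sum>j\<in>{m<..Suc d}. real (ord_partitions j m) * Fvec d j)"
      by (simp add: sum_distrib_left algebra_simps)
    also have "\<dots> = G (Suc d) * (Fvec d m * (fact (Suc d) - fact m))"
      using Fvec_rec[OF assms(1) m] by simp
    finally have "(fact (Suc d) - fact m) * G m = (fact (Suc d) - fact m) * (G (Suc d) * Fvec d m)"
      by (simp add: algebra_simps)
    moreover have "(fact (Suc d) :: real) - fact m \<noteq> 0" using fact_less_fact_Suc[OF assms(1) m] by simp
    ultimately show ?thesis by simp
  qed
qed

lemma Fvec_nonneg: "d \<ge> 1 \<Longrightarrow> m \<le> Suc d \<Longrightarrow> Fvec d m \<ge> 0"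
proof (induction "Suc d - m" arbitrary: m rule: less_induct)
  case less
  show ?case
  proof (cases "m = Suc d")
    case True
    then show ?thesis by (simp add: Fvec_top)
  next
    case False
    then have m: "m < Suc d" using less.prems by simp
    have "(\<Sum>j\<in>{m<..Suc d}. real (ord_partitions j m) * Fvec d j) \<ge> 0"
      using less by (intro sum_nonneg mult_nonneg_nonneg) auto
    then have "Fvec d m * (fact (Suc d) - fact m) \<ge> 0" using Fvec_rec[OF less.prems(1) m] by simp
    moreover have "(fact (Suc d) :: real) - fact m > 0" using fact_less_fact_Suc[OF less.prems(1) m] by simp
    ultimately show ?thesis by (simp add: zero_le_mult_iff)
  qed
qed

lemma Fvec_1_pos:
  assumes "d \<ge> 1"
  shows "Fvec d 1 > 0"
proof -
  have m: "1 < Suc d" using assms by simp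
  have "1 = real (ord_partitions (Suc d) 1) * Fvec d (Suc d)"
    using ord_partitions_1[of "Suc d"] by (simp add: Fvec_top)
  also have "\<dots> \<le> (\<Sum>j\<in>{1<..Suc d}. real (ord_partitions j 1) * Fvec d j)"
    using assms Fvec_nonneg[OF assms] by (intro member_le_sum) auto
  also have "\<dots> = Fvec d 1 * (fact (Suc d) - fact 1)"
    using Fvec_rec[OF assms m] by simp
  finally have "0 < Fvec d 1 * (fact (Suc d) - fact 1)" by simp
  moreover have "0 < (fact (Suc d) :: real) - fact 1" using fact_less_fact_Suc[OF assms m] by simp
  ultimately show ?thesis by (rule zero_less_mult_pos2)
qed

text \<open>
  With A_{j,m} = ord_partitions j m, B_{m,u} = (m choose u) and J = diag((-1)^j), the identity
  proved below says J B A = A J B, so F \<mapsto> F J B maps left eigenvectors of A to left eigenvectors.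
\<close>
definition binomial_ord_partitions_sum :: "nat \<Rightarrow> nat \<Rightarrow> nat \<Rightarrow> real" where
  "binomial_ord_partitions_sum N j u = (\<Sum>i\<le>N. real (j choose i) * real (ord_partitions i u))"

definition alternating_ord_partitions_sum :: "nat \<Rightarrow> nat \<Rightarrow> nat \<Rightarrow> real" where
  "alternating_ord_partitions_sum N j u =
    (\<Sum>m\<le>N. (-1)^m * real (m choose u) * real (ord_partitions j m))"

lemma Suc_mult_binomial_Suc:
  "real (Suc m) * real (Suc m choose u) = real (m + u + 1) * real (m choose u) + real u * real (m choose (u - 1))"
proof (cases u)
  case (Suc u')
  have "real (Suc m) * real (m choose u') = real (Suc m choose Suc u') * real (Suc u')"
    using Suc_times_binomial_eq[of m u'] by (metis of_nat_mult)
  then show ?thesis using Suc by (simp add: algebra_simps)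
qed simp

lemma binomial_ord_partitions_sum_Suc:
  assumes "j < N"
  shows "binomial_ord_partitions_sum N (Suc j) u =
    real (u + 1) * binomial_ord_partitions_sum N j u + real u * binomial_ord_partitions_sum N j (u - 1)"
proof -
  obtain N' where N: "N = Suc N'" using assms by (cases N) auto
  have jN: "j \<le> N'" using assms N by simp
  have trunc: "(\<Sum>i\<le>N'. real (j choose i) * real (ord_partitions i v)) = binomial_ord_partitions_sum N j v" for v
    unfolding binomial_ord_partitions_sum_def N using jN by simp
  have "binomial_ord_partitions_sum N (Suc j) u = real (ord_partitions 0 u) +
      (\<Sum>i\<le>N'. real (Suc j choose Suc i) * real (ord_partitions (Suc i) u))"
    unfolding binomial_ord_partitions_sum_def N by (subst sum.atMost_Suc_shift) simp
  also have "\<dots> = real (ord_partitions 0 u) + (\<Sum>i\<le>N'. real (j choose Suc i) * real (ord_partitions (Suc i) u))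
      + (\<Sum>i\<le>N'. real (j choose i) * real (ord_partitions (Suc i) u))"
    by (simp add: sum.distrib algebra_simps)
  also have "real (ord_partitions 0 u) + (\<Sum>i\<le>N'. real (j choose Suc i) * real (ord_partitions (Suc i) u)) =
      binomial_ord_partitions_sum N j u"
    unfolding binomial_ord_partitions_sum_def N by (subst sum.atMost_Suc_shift) simp
  also have "(\<Sum>i\<le>N'. real (j choose i) * real (ord_partitions (Suc i) u)) =
      real u * binomial_ord_partitions_sum N j u + real u * binomial_ord_partitions_sum N j (u - 1)"
  proof (cases u)
    case (Suc u')
    have "(\<Sum>i\<le>N'. real (j choose i) * real (ord_partitions (Suc i) u)) =
        real u * (\<Sum>i\<le>N'. real (j choose i) * real (ord_partitions i u)) +
        real u * (\<Sum>i\<le>N'. real (j choose i) * real (ord_partitions i u'))"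
      unfolding Suc ord_partitions_Suc_Suc by (simp add: sum_distrib_left sum.distrib algebra_simps)
    then show ?thesis unfolding trunc using Suc by simp
  qed simp
  finally show ?thesis by (simp add: algebra_simps)
qed

lemma alternating_ord_partitions_sum_Suc:
  assumes "j < N"
  shows "alternating_ord_partitions_sum N (Suc j) u =
    - real (u + 1) * alternating_ord_partitions_sum N j u - real u * alternating_ord_partitions_sum N j (u - 1)"
proof -
  obtain N' where N: "N = Suc N'" using assms by (cases N) auto
  have jN: "j \<le> N'" using assms N by simp
  define P1 where "P1 = (\<Sum>m\<le>N'. (-1)^m * (real (Suc m) * real (Suc m choose u)) * real (ord_partitions j (Suc m)))"
  define P2 where "P2 = (\<Sum>m\<le>N'. (-1)^m * (real (Suc m) * real (Suc m choose u)) * real (ord_partitions j m))"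
  define Q where "Q = (\<Sum>m\<le>N. (-1)^m * (real m * real (m choose u)) * real (ord_partitions j m))"
  have "alternating_ord_partitions_sum N (Suc j) u =
      (\<Sum>m\<le>N'. (-1)^(Suc m) * real (Suc m choose u) * real (ord_partitions (Suc j) (Suc m)))"
    unfolding alternating_ord_partitions_sum_def N by (subst sum.atMost_Suc_shift) simp
  also have "\<dots> = - (P1 + P2)"
    unfolding P1_def P2_def ord_partitions_Suc_Suc
    by (simp add: sum.distrib[symmetric] sum_negf[symmetric] algebra_simps)
  finally have v: "alternating_ord_partitions_sum N (Suc j) u = - (P1 + P2)" .
  have q: "Q = - P1"
    unfolding Q_def P1_def N by (subst sum.atMost_Suc_shift) (simp add: sum_negf[symmetric])
  have p: "P2 = (\<Sum>m\<le>N. (-1)^m * (real (Suc m) * real (Suc m choose u)) * real (ord_partitions j m))"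
    unfolding P2_def N using jN by (simp add: ord_partitions_eq_0)
  have "alternating_ord_partitions_sum N (Suc j) u = Q - P2" using v q by simp
  also have "\<dots> = (\<Sum>m\<le>N. (-1)^m * (real m * real (m choose u) - real (Suc m) * real (Suc m choose u)) *
      real (ord_partitions j m))"
    unfolding Q_def p by (simp add: sum_subtractf[symmetric] algebra_simps)
  also have "\<dots> = (\<Sum>m\<le>N. (-1)^m * (- real (u + 1) * real (m choose u) - real u * real (m choose (u - 1))) *
      real (ord_partitions j m))"
    by (intro sum.cong refl) (subst Suc_mult_binomial_Suc, simp add: algebra_simps)
  also have "\<dots> = - real (u + 1) * alternating_ord_partitions_sum N j u - real u * alternating_ord_partitions_sum N j (u - 1)"
    unfolding alternating_ord_partitions_sum_def by (simp add: sum_subtractf[symmetric] sum_distrib_left algebra_simps)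
  finally show ?thesis .
qed

lemma alternating_binomial_ord_partitions_sum:
  "j \<le> N \<Longrightarrow> (-1)^j * binomial_ord_partitions_sum N j u = alternating_ord_partitions_sum N j u"
proof (induction j arbitrary: u)
  case 0
  have "binomial_ord_partitions_sum N 0 u = real (ord_partitions 0 u)"
    unfolding binomial_ord_partitions_sum_def by (simp add: sum.atMost_shift)
  moreover have "alternating_ord_partitions_sum N 0 u = (\<Sum>m\<le>N. if m = 0 then real (0 choose u) else 0)"
    unfolding alternating_ord_partitions_sum_def by (intro sum.cong refl) (auto simp: ord_partitions_eq_0)
  ultimately show ?case by (cases u) simp_all
next
  case (Suc j)
  then have jN: "j < N" by simp
  have "(-1)^Suc j * binomial_ord_partitions_sum N (Suc j) u =
      - (real (u + 1) * ((-1)^j * binomial_ord_partitions_sum N j u) +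
         real u * ((-1)^j * binomial_ord_partitions_sum N j (u - 1)))"
    unfolding binomial_ord_partitions_sum_Suc[OF jN] by (simp add: algebra_simps)
  also have "\<dots> = alternating_ord_partitions_sum N (Suc j) u"
    unfolding alternating_ord_partitions_sum_Suc[OF jN] using Suc.IH jN by (simp add: algebra_simps)
  finally show ?case .
qed

definition alternating_binomial_Fvec :: "nat \<Rightarrow> nat \<Rightarrow> real" where
  "alternating_binomial_Fvec d u = (\<Sum>j\<le>Suc d. (-1)^j * real (j choose u) * Fvec d j)"

lemma alternating_binomial_Fvec_eigenvector:
  assumes "d \<ge> 1" "m \<le> Suc d"
  shows "fact (Suc d) * alternating_binomial_Fvec d m =
    (\<Sum>u\<le>Suc d. real (ord_partitions u m) * alternating_binomial_Fvec d u)"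
proof -
  have "(\<Sum>u\<le>Suc d. real (ord_partitions u m) * alternating_binomial_Fvec d u) =
      (\<Sum>u\<le>Suc d. \<Sum>j\<le>Suc d. (-1)^j * Fvec d j * (real (j choose u) * real (ord_partitions u m)))"
    unfolding alternating_binomial_Fvec_def by (simp add: sum_distrib_left algebra_simps)
  also have "\<dots> = (\<Sum>j\<le>Suc d. (-1)^j * Fvec d j * binomial_ord_partitions_sum (Suc d) j m)"
    unfolding binomial_ord_partitions_sum_def sum_distrib_left by (rule sum.swap)
  also have "\<dots> = (\<Sum>j\<le>Suc d. Fvec d j * alternating_ord_partitions_sum (Suc d) j m)"
    by (intro sum.cong refl)
      (simp add: alternating_binomial_ord_partitions_sum[symmetric] algebra_simps)
  also have "\<dots> = (\<Sum>m'\<le>Suc d. (-1)^m' * real (m' choose m) *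
      (\<Sum>j\<le>Suc d. real (ord_partitions j m') * Fvec d j))"
    unfolding alternating_ord_partitions_sum_def sum_distrib_left
    by (subst sum.swap, intro sum.cong refl, simp add: algebra_simps)
  also have "\<dots> = (\<Sum>m'\<le>Suc d. (-1)^m' * real (m' choose m) * (fact (Suc d) * Fvec d m'))"
    using Fvec_eigenvector[OF assms(1)] by (intro sum.cong refl) simp
  also have "\<dots> = fact (Suc d) * alternating_binomial_Fvec d m"
    unfolding alternating_binomial_Fvec_def by (simp add: sum_distrib_left algebra_simps)
  finally show ?thesis by simp
qed

lemma alternating_binomial_Fvec_eq:
  assumes "d \<ge> 1" "m \<le> Suc d"
  shows "alternating_binomial_Fvec d m = (-1)^(Suc d) * Fvec d m"
proof -
  have "alternating_binomial_Fvec d m = alternating_binomial_Fvec d (Suc d) * Fvec d m"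
    using alternating_binomial_Fvec_eigenvector[OF assms(1)] assms(2)
    by (intro left_eigenvector_unique[OF assms(1)]) auto
  moreover have "alternating_binomial_Fvec d (Suc d) = (-1)^(Suc d)"
    unfolding alternating_binomial_Fvec_def by (simp add: Fvec_top binomial_eq_0)
  ultimately show ?thesis by simp
qed

lemma alternating_sum_Fvec: "d \<ge> 1 \<Longrightarrow> (\<Sum>j\<le>Suc d. (-1)^j * Fvec d j) = 0"
  using alternating_binomial_Fvec_eq[of d 0] Fvec_0[of d] by (simp add: alternating_binomial_Fvec_def)

lemma alternating_sum_mult_Fvec:
  "d \<ge> 1 \<Longrightarrow> (\<Sum>j\<le>Suc d. (-1)^j * real j * Fvec d j) = (-1)^(Suc d) * Fvec d 1"
  using alternating_binomial_Fvec_eq[of d 1] by (simp add: alternating_binomial_Fvec_def)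

lemma neg_one_power_diff: "j \<le> n \<Longrightarrow> (-1::'b::ring_1)^(n - j) = (-1)^n * (-1)^j"
  by (simp add: neg_one_power_add_eq_neg_one_power_diff[symmetric] power_add)

lemma coeff_x_minus_1_power:
  "coeff ([:-1, 1:] ^ n :: 'b::comm_ring_1 poly) t = (if t \<le> n then of_nat (n choose t) * (-1)^(n - t) else 0)"
proof (cases "t \<le> n")
  case True
  then show ?thesis by (simp add: coeff_linear_poly_power)
next
  case False
  have "degree ([:-1, 1:] ^ n :: 'b poly) \<le> n"
    by (rule order.trans[OF degree_power_le]) simp
  then show ?thesis using False by (simp add: coeff_eq_0)
qed

lemma pcompose_monom: "pcompose (monom c n) q = smult c (q ^ n)"
proof -
  have "pcompose ([:0, 1:] ^ n) q = q ^ n"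
    by (induction n) (simp_all add: pcompose_1 pcompose_mult pcompose_pCons)
  then show ?thesis by (simp add: monom_altdef pcompose_smult)
qed

lemma Hpoly_eq: "Hpoly d = (\<Sum>j\<le>Suc d. smult (Fvec d j) ([:-1, 1:] ^ (Suc d - j)))"
proof -
  have Fpoly: "Fpoly d = (\<Sum>j\<le>Suc d. monom (Fvec d j) (Suc d - j))"
    unfolding Fpoly_def
  proof (rule sum.reindex_bij_witness[of _ "\<lambda>j. int j - 1" "\<lambda>i. nat (i + 1)"])
    fix a :: int assume a: "a \<in> {- 1..int d}"
    then show "int (nat (a + 1)) - 1 = a" "nat (a + 1) \<in> {..Suc d}" by auto
    have "Suc d - nat (a + 1) = nat (int d - a)" using a by auto
    then show "monom (Fvec d (nat (a + 1))) (Suc d - nat (a + 1)) = monom (Fnum a (int d)) (nat (int d - a))"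
      using a by (simp add: Fvec_def)
  qed auto
  show ?thesis unfolding Hpoly_def Fpoly pcompose_sum pcompose_monom ..
qed

lemma coeff_Hpoly: "coeff (Hpoly d) t = (\<Sum>j\<le>Suc d. Fvec d j * coeff ([:-1, 1:] ^ (Suc d - j)) t)"
  unfolding Hpoly_eq coeff_sum coeff_smult ..

lemma Hnum_1_eq:
  assumes "d \<ge> 1"
  shows "Hnum 1 d = Fvec d 1"
proof -
  have "Hnum 1 d = (\<Sum>j\<le>Suc d. Fvec d j * coeff ([:-1, 1:] ^ (Suc d - j)) d)"
    unfolding Hnum_def coeff_Hpoly by simp
  also have "\<dots> = (\<Sum>j\<le>Suc d. if j = 1 then Fvec d 1 else 0)"
  proof (intro sum.cong refl)
    fix j :: nat
    have "j = 0 \<or> j = 1 \<or> 1 < j" by linarith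
    then show "Fvec d j * coeff ([:-1, 1:] ^ (Suc d - j)) d = (if j = 1 then Fvec d 1 else 0)"
      using assms Fvec_0[OF assms] by (elim disjE) (auto simp: coeff_x_minus_1_power)
  qed
  also have "\<dots> = Fvec d 1" using assms by simp
  finally show ?thesis .
qed

lemma Hnum_diag_eq:
  assumes "d \<ge> 1"
  shows "Hnum d d = Fvec d 1"
proof -
  have "Hnum d d = (\<Sum>j\<le>Suc d. Fvec d j * coeff ([:-1, 1:] ^ (Suc d - j)) 1)"
    unfolding Hnum_def coeff_Hpoly by simp
  also have "\<dots> = (\<Sum>j\<le>Suc d. - ((-1)^(Suc d)) * (real (Suc d) * ((-1)^j * Fvec d j) - (-1)^j * real j * Fvec d j))"
  proof (intro sum.cong refl)
    fix j assume j: "j \<in> {..Suc d}"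
    show "Fvec d j * coeff ([:-1, 1:] ^ (Suc d - j)) 1 =
        - ((-1)^(Suc d)) * (real (Suc d) * ((-1)^j * Fvec d j) - (-1)^j * real j * Fvec d j)"
    proof (cases "j = Suc d")
      case False
      then have "j \<le> d" using j by simp
      then have "(-1::real)^(Suc d - j - 1) = (-1)^d * (-1)^j"
        using neg_one_power_diff[of j d] by (simp add: Suc_diff_le)
      moreover have "1 \<le> Suc d - j" using \<open>j \<le> d\<close> by simp
      ultimately show ?thesis using \<open>j \<le> d\<close> by (simp add: coeff_x_minus_1_power of_nat_diff algebra_simps)
    qed simp
  qed
  also have "\<dots> = - ((-1)^(Suc d)) * (real (Suc d) * (\<Sum>j\<le>Suc d. (-1)^j * Fvec d j) -
      (\<Sum>j\<le>Suc d. (-1)^j * real j * Fvec d j))"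
    by (simp only: sum_distrib_left sum_subtractf[symmetric])
  also have "\<dots> = Fvec d 1"
    unfolding alternating_sum_Fvec[OF assms] alternating_sum_mult_Fvec[OF assms] by simp
  finally show ?thesis .
qed

lemma Hpoly_subleading_coeffs:
  assumes "d \<ge> 1"
  shows "coeff (Hpoly d) d = Hnum 1 d" "coeff (Hpoly d) 1 = Hnum 1 d" "Hnum 1 d > 0"
  using Hnum_1_eq[OF assms] Hnum_diag_eq[OF assms] Fvec_1_pos[OF assms] by (simp_all add: Hnum_def)

subsection \<open>Growth of the f-vector under iterated subdivision\<close>

lemma LIMSEQ_perturbed_contraction:
  fixes y e :: "nat \<Rightarrow> real"
  assumes rec: "\<And>k. y (Suc k) = r * y k + e k" and r: "0 \<le> r" "r < 1" and e: "e \<longlonglongrightarrow> 0"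
  shows "y \<longlonglongrightarrow> 0"
  unfolding LIMSEQ_iff
proof (intro allI impI)
  fix \<epsilon> :: real assume \<epsilon>: "\<epsilon> > 0"
  then obtain N where N: "\<And>k. k \<ge> N \<Longrightarrow> \<bar>e k\<bar> < \<epsilon> * (1 - r) / 2"
    using e r unfolding LIMSEQ_iff by (metis diff_gt_0_iff_gt half_gt_zero mult_pos_pos real_norm_def diff_0_right)
  have bound: "\<bar>y k\<bar> \<le> r ^ (k - N) * \<bar>y N\<bar> + \<epsilon> / 2" if "k \<ge> N" for k
    using that
  proof (induction k rule: dec_induct)
    case base
    then show ?case using \<epsilon> by simp
  next
    case (step k)
    have "\<bar>y (Suc k)\<bar> \<le> r * \<bar>y k\<bar> + \<bar>e k\<bar>"
      unfolding rec using abs_triangle_ineq[of "r * y k" "e k"] r by (simp add: abs_mult)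
    also have "\<dots> \<le> r * (r ^ (k - N) * \<bar>y N\<bar> + \<epsilon> / 2) + \<epsilon> * (1 - r) / 2"
      using step.IH N[OF step.hyps(1)] r by (intro add_mono mult_left_mono) auto
    also have "\<dots> = r ^ (Suc k - N) * \<bar>y N\<bar> + \<epsilon> / 2"
      using step.hyps by (simp add: Suc_diff_le field_simps)
    finally show ?case .
  qed
  have "(\<lambda>k. r ^ k * \<bar>y N\<bar>) \<longlonglongrightarrow> 0"
    using r by (intro tendsto_mult_left_zero LIMSEQ_power_zero) simp
  then obtain M where M: "\<And>k. k \<ge> M \<Longrightarrow> r ^ k * \<bar>y N\<bar> < \<epsilon> / 2"
    using \<epsilon> r unfolding LIMSEQ_iff by (metis abs_of_nonneg abs_ge_zero half_gt_zero real_norm_def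
        zero_le_mult_iff zero_le_power diff_0_right)
  show "\<exists>K. \<forall>k\<ge>K. norm (y k - 0) < \<epsilon>"
  proof (intro exI allI impI)
    fix k assume "k \<ge> N + M"
    then have "\<bar>y k\<bar> \<le> r ^ (k - N) * \<bar>y N\<bar> + \<epsilon> / 2" "r ^ (k - N) * \<bar>y N\<bar> < \<epsilon> / 2"
      using bound M by auto
    then show "norm (y k - 0) < \<epsilon>" by simp
  qed
qed

lemma LIMSEQ_affine_recurrence:
  fixes x b :: "nat \<Rightarrow> real"
  assumes rec: "\<And>k. x (Suc k) = r * x k + b k" and r: "0 \<le> r" "r < 1" and b: "b \<longlonglongrightarrow> B"
  shows "x \<longlonglongrightarrow> B / (1 - r)"
proof -
  have "(\<lambda>k. x k - B / (1 - r)) \<longlonglongrightarrow> 0"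
  proof (rule LIMSEQ_perturbed_contraction[OF _ r])
    show "x (Suc k) - B / (1 - r) = r * (x k - B / (1 - r)) + (b k - B)" for k
      using rec[of k] r by (simp add: field_simps)
    show "(\<lambda>k. b k - B) \<longlonglongrightarrow> 0" using b by (simp add: LIMSEQ_iff)
  qed
  then show ?thesis by (simp add: LIMSEQ_iff)
qed

text \<open>
  Downward induction on m: the normalized m-th entry satisfies an affine recurrence with factor
  m! / (d+1)! < 1, whose inhomogeneous term converges by the induction hypothesis.
\<close>
lemma face_count_bary_iter_limit:
  assumes "simplicial_complex \<Delta>" "finite \<Delta>" "max_face_card \<Delta> (Suc d)" "d \<ge> 1"
  shows "m \<le> Suc d \<Longrightarrow> (\<lambda>k. real (face_count (bary_iter \<Delta> k) m) / fact (Suc d) ^ k)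
    \<longlonglongrightarrow> real (face_count \<Delta> (Suc d)) * Fvec d m"
proof (induction "Suc d - m" arbitrary: m rule: less_induct)
  case less
  define f where "f = real (face_count \<Delta> (Suc d))"
  define \<mu> :: real where "\<mu> = fact (Suc d)"
  have \<mu>: "\<mu> > 0" by (simp add: \<mu>_def)
  consider "m = Suc d" | "m < Suc d" using less.prems by linarith
  then show ?case
  proof cases
    case 1
    then show ?thesis
      using face_count_bary_iter_top[OF assms(1-3)] by (simp add: Fvec_top del: fact_Suc)
  next
    case 2
    define x where "x k = real (face_count (bary_iter \<Delta> k) m) / \<mu> ^ k" for k
    define r where "r = fact m / \<mu>"
    define b where "b k = (\<Sum>j\<in>{m<..Suc d}. real (ord_partitions j m) *
      (real (face_count (bary_iter \<Delta> k) j) / \<mu> ^ k)) / \<mu>" for k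
    have IH: "(\<lambda>k. real (face_count (bary_iter \<Delta> k) j) / \<mu> ^ k) \<longlonglongrightarrow> f * Fvec d j"
      if "j \<in> {m<..Suc d}" for j
      unfolding f_def \<mu>_def using that by (intro less.hyps) auto
    have S: "(\<Sum>j\<in>{m<..Suc d}. real (ord_partitions j m) * (real (face_count (bary_iter \<Delta> k) j) / \<mu> ^ k)) =
        (\<Sum>j\<in>{m<..Suc d}. real (face_count (bary_iter \<Delta> k) j) * real (ord_partitions j m)) / \<mu> ^ k" for k
      by (simp add: sum_divide_distrib algebra_simps)
    have rec: "x (Suc k) = r * x k + b k" for k
      unfolding x_def r_def b_def S face_count_bary_iter_Suc_triangular[OF assms(1-3) less.prems]
      using \<mu> by (simp add: field_simps)
    have r: "0 \<le> r" "r < 1" using fact_less_fact_Suc[OF assms(4) 2] \<mu> by (auto simp: r_def \<mu>_def)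
    have "b \<longlonglongrightarrow> (\<Sum>j\<in>{m<..Suc d}. real (ord_partitions j m) * (f * Fvec d j)) / \<mu>"
      unfolding b_def using IH \<mu> by (intro tendsto_intros) auto
    with rec r have "x \<longlonglongrightarrow> (\<Sum>j\<in>{m<..Suc d}. real (ord_partitions j m) * (f * Fvec d j)) / \<mu> / (1 - r)"
      by (rule LIMSEQ_affine_recurrence)
    also have "(\<Sum>j\<in>{m<..Suc d}. real (ord_partitions j m) * (f * Fvec d j)) = f * (Fvec d m * (\<mu> - fact m))"
      using Fvec_rec[OF assms(4) 2] by (simp add: \<mu>_def sum_distrib_left algebra_simps)
    also have "f * (Fvec d m * (\<mu> - fact m)) / \<mu> / (1 - r) = f * Fvec d m"
      using fact_less_fact_Suc[OF assms(4) 2] \<mu> unfolding r_def \<mu>_def[symmetric] by (simp add: field_simps)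
    finally show ?thesis by (simp add: x_def f_def \<mu>_def)
  qed
qed

subsection \<open>Extreme roots of monic polynomials\<close>

lemma coeffs_prod_monic_linear:
  fixes r :: "nat \<Rightarrow> 'b::comm_ring_1"
  shows "coeff (\<Prod>i<n. [:-r i, 1:]) n = 1 \<and> (\<forall>j>n. coeff (\<Prod>i<n. [:-r i, 1:]) j = 0) \<and>
         (n \<ge> 1 \<longrightarrow> coeff (\<Prod>i<n. [:-r i, 1:]) (n - 1) = - (\<Sum>i<n. r i))"
proof (induction n)
  case 0
  then show ?case by (auto simp: coeff_1)
next
  case (Suc n)
  define P where "P = (\<Prod>i<n. [:-r i, 1:])"
  have "(\<Prod>i<Suc n. [:-r i, 1:]) = smult (- r n) P + pCons 0 P"
    unfolding P_def by (simp add: mult_pCons_right)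
  then have c: "coeff (\<Prod>i<Suc n. [:-r i, 1:]) j = - r n * coeff P j + (if j = 0 then 0 else coeff P (j - 1))" for j
    by (cases j) auto
  have IH: "coeff P n = 1" "\<And>j. j > n \<Longrightarrow> coeff P j = 0" "n \<ge> 1 \<Longrightarrow> coeff P (n - 1) = - (\<Sum>i<n. r i)"
    using Suc.IH unfolding P_def by auto
  show ?case
    unfolding c using IH by (cases n) auto
qed

lemma exists_root_norm_ge:
  fixes p :: "complex poly"
  assumes "degree p = n" "coeff p n = 1" "n \<ge> 1" "norm (coeff p (n - 1)) \<ge> real n * R"
  shows "\<exists>z. poly p z = 0 \<and> norm z \<ge> R"
proof (rule ccontr)
  assume small: "\<not> ?thesis"
  obtain r where "smult (lead_coeff p) (\<Prod>i<degree p. [:-r i, 1:]) = p"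
    by (rule complex_poly_decompose')
  then have p: "p = (\<Prod>i<n. [:-r i, 1:])" using assms by simp
  have "norm (r i) < R" if "i < n" for i
    using small that unfolding p poly_prod by (force intro: prod_zero)
  then have "norm (\<Sum>i<n. r i) < real n * R"
    using assms(3) norm_sum[of r "{..<n}"] sum_strict_mono[of "{..<n}" "\<lambda>i. norm (r i)" "\<lambda>_. R"]
    by (fastforce simp: lessThan_empty_iff)
  then show False
    using assms(3,4) coeffs_prod_monic_linear[of r n] unfolding p by simp
qed

text \<open>Dividing p(z) = 0 by z^(n-1) isolates the subleading coefficient.\<close>
lemma norm_root_plus_subleading_le:
  fixes p :: "complex poly" and z :: complex
  assumes "degree p = n" "coeff p n = 1" "n \<ge> 1" "poly p z = 0" "z \<noteq> 0"
  shows "norm (z + coeff p (n - 1)) \<le> (\<Sum>i<n - 1. norm (coeff p i) / norm z ^ (n - 1 - i))"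
proof -
  obtain n' where n': "n = Suc n'" using assms(3) by (cases n) auto
  have "{..n} = {..<n - 1} \<union> {n - 1, n}" using assms(3) by auto
  then have "0 = (\<Sum>i<n - 1. coeff p i * z ^ i) + coeff p (n - 1) * z ^ (n - 1) + z ^ n"
    using assms(1-4) n' by (simp add: poly_altdef sum.union_disjoint add_ac)
  then have "z ^ (n - 1) * (z + coeff p (n - 1)) = - (\<Sum>i<n - 1. coeff p i * z ^ i)"
    unfolding n' by (simp add: algebra_simps eq_neg_iff_add_eq_0)
  then have "norm z ^ (n - 1) * norm (z + coeff p (n - 1)) \<le> (\<Sum>i<n - 1. norm (coeff p i) * norm z ^ i)"
    by (metis (no_types, lifting) norm_minus_cancel norm_mult norm_power norm_sum order.trans sum_mono order_refl)
  then have "norm (z + coeff p (n - 1)) \<le> (\<Sum>i<n - 1. norm (coeff p i) * norm z ^ i) / norm z ^ (n - 1)"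
    using assms(5) by (simp add: field_simps)
  also have "\<dots> = (\<Sum>i<n - 1. norm (coeff p i) / norm z ^ (n - 1 - i))"
    unfolding sum_divide_distrib
  proof (intro sum.cong refl)
    fix i assume "i \<in> {..<n - 1}"
    then have "norm z ^ (n - 1) = norm z ^ i * norm z ^ (n - 1 - i)" by (simp add: power_add[symmetric])
    then show "norm (coeff p i) * norm z ^ i / norm z ^ (n - 1) = norm (coeff p i) / norm z ^ (n - 1 - i)"
      using assms(5) by simp
  qed
  finally show ?thesis .
qed

lemma root_norm_bound:
  fixes p :: "complex poly" and z :: complex and L \<epsilon> :: real
  assumes "degree p = n" "coeff p n = 1" "n \<ge> 1" "poly p z = 0" "L > 0" "\<epsilon> > 0" "norm z \<ge> \<epsilon> * L"
  shows "norm (z / of_real L + coeff p (n - 1) / of_real L) \<le>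
           (\<Sum>i<n - 1. norm (coeff p i) / L ^ (n - i) / \<epsilon> ^ (n - 1 - i))"
proof -
  have z: "norm z > 0" using assms(5-7) by (smt (verit) mult_pos_pos)
  have "norm (z + coeff p (n - 1)) \<le> (\<Sum>i<n - 1. norm (coeff p i) / norm z ^ (n - 1 - i))"
    using z by (intro norm_root_plus_subleading_le[OF assms(1-4)]) auto
  also have "\<dots> \<le> (\<Sum>i<n - 1. norm (coeff p i) / (\<epsilon> * L) ^ (n - 1 - i))"
    using assms(5-7) z by (intro sum_mono divide_left_mono power_mono mult_pos_pos zero_less_power) auto
  finally have "norm (z + coeff p (n - 1)) / L \<le> (\<Sum>i<n - 1. norm (coeff p i) / (\<epsilon> * L) ^ (n - 1 - i)) / L"
    using assms(5) by (simp add: divide_right_mono)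
  also have "\<dots> = (\<Sum>i<n - 1. norm (coeff p i) / L ^ (n - i) / \<epsilon> ^ (n - 1 - i))"
    unfolding sum_divide_distrib
  proof (intro sum.cong refl)
    fix i assume "i \<in> {..<n - 1}"
    then have "L ^ (n - i) = L * L ^ (n - 1 - i)" by (simp add: power_Suc[symmetric] Suc_diff_Suc)
    then show "norm (coeff p i) / (\<epsilon> * L) ^ (n - 1 - i) / L = norm (coeff p i) / L ^ (n - i) / \<epsilon> ^ (n - 1 - i)"
      by (simp add: power_mult_distrib field_simps)
  qed
  finally show ?thesis
    using assms(5) by (simp add: add_divide_distrib[symmetric] norm_divide)
qed

lemma filterlim_realpow_at_top:
  fixes x :: real
  assumes "x > 1"
  shows "filterlim (\<lambda>k. x ^ k) at_top sequentially"
  using assms by (intro filterlim_at_infinity_imp_filterlim_at_top filterlim_realpow_sequentially_gt1) auto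

lemma fact_power_scale:
  assumes "d \<ge> 1"
  shows "(fact (Suc d) :: real) ^ k > 0" "filterlim (\<lambda>k. (fact (Suc d) :: real) ^ k) at_top sequentially"
proof -
  have "(1::real) < fact (Suc d)" using fact_less_fact_Suc[OF assms, of 1] assms by simp
  then show "(fact (Suc d) :: real) ^ k > 0" "filterlim (\<lambda>k. (fact (Suc d) :: real) ^ k) at_top sequentially"
    by (simp_all add: filterlim_realpow_at_top del: fact_Suc)
qed

lemma norm_div_power_tendsto_0:
  fixes x :: "nat \<Rightarrow> complex" and L :: "nat \<Rightarrow> real"
  assumes "(\<lambda>k. x k / of_real (L k)) \<longlonglongrightarrow> a" "\<And>k. L k > 0" "filterlim L at_top sequentially" "m \<ge> 2"
  shows "(\<lambda>k. norm (x k) / L k ^ m) \<longlonglongrightarrow> 0"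
proof -
  obtain m' where m': "m = Suc m'" "m' \<ge> 1" using assms(4) by (cases m) auto
  have "norm (x k) / L k ^ m = norm (x k / of_real (L k)) * inverse (L k) ^ m'" for k
    using assms(2)[of k] unfolding m' by (simp add: norm_divide field_simps power_inverse)
  moreover have "(\<lambda>k. norm (x k / of_real (L k)) * inverse (L k) ^ m') \<longlonglongrightarrow> norm a * 0 ^ m'"
    by (intro tendsto_intros assms(1) tendsto_inverse_0_at_top assms(3))
  ultimately show ?thesis using m' by (simp add: power_0_left)
qed

text \<open>
  The roots sum to minus the subleading coefficient, so some root has modulus of order L k; for
  such z the coefficients below the subleading one are negligible in p(z) / z^(n-1).
\<close>
lemma max_root_tendsto:
  fixes p :: "nat \<Rightarrow> complex poly" and L :: "nat \<Rightarrow> real" and \<rho> a :: "nat \<Rightarrow> complex"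
  assumes n: "n \<ge> 1" and deg: "\<And>k. degree (p k) = n" and monic: "\<And>k. coeff (p k) n = 1"
    and L: "\<And>k. L k > 0" "filterlim L at_top sequentially"
    and lim: "\<And>i. (\<lambda>k. coeff (p k) i / of_real (L k)) \<longlonglongrightarrow> a i" and a: "a (n - 1) \<noteq> 0"
    and root: "\<And>k. poly (p k) (\<rho> k) = 0"
    and max: "\<And>k z. poly (p k) z = 0 \<Longrightarrow> norm z \<le> norm (\<rho> k)"
  shows "(\<lambda>k. \<rho> k / of_real (L k)) \<longlonglongrightarrow> - a (n - 1)"
proof -
  define \<epsilon> where "\<epsilon> = norm (a (n - 1)) / (2 * real n)"
  define b where "b k = coeff (p k) (n - 1) / of_real (L k)" for k
  define \<delta> where "\<delta> k = (\<Sum>i<n - 1. norm (coeff (p k) i) / L k ^ (n - i) / \<epsilon> ^ (n - 1 - i))" for k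
  have \<epsilon>: "\<epsilon> > 0" using a n by (simp add: \<epsilon>_def)
  have "\<delta> \<longlonglongrightarrow> (\<Sum>i<n - 1. 0 / \<epsilon> ^ (n - 1 - i))"
    unfolding \<delta>_def using lim L \<epsilon> by (intro tendsto_sum tendsto_divide norm_div_power_tendsto_0) auto
  then have \<delta>: "\<delta> \<longlonglongrightarrow> 0" by simp
  have "eventually (\<lambda>k. real n * \<epsilon> < norm (b k)) sequentially"
    using tendsto_norm[OF lim[of "n - 1"]] a n unfolding b_def
    by (intro order_tendstoD(1)) (auto simp: \<epsilon>_def)
  then have "eventually (\<lambda>k. norm (\<rho> k / of_real (L k) + b k) \<le> norm (\<delta> k) * 1) sequentially"
  proof eventually_elim
    case (elim k)
    have "real n * (\<epsilon> * L k) \<le> norm (coeff (p k) (n - 1))"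
      using elim L(1)[of k] by (simp add: b_def norm_divide pos_less_divide_eq mult.assoc[symmetric])
    then obtain z where "poly (p k) z = 0" "norm z \<ge> \<epsilon> * L k"
      using exists_root_norm_ge[OF deg monic n] by blast
    then have "norm (\<rho> k) \<ge> \<epsilon> * L k" using max by fastforce
    then have "norm (\<rho> k / of_real (L k) + b k) \<le> \<delta> k"
      using root_norm_bound[OF deg monic n root L(1) \<epsilon>] by (simp add: b_def \<delta>_def)
    then show ?case by simp
  qed
  with \<delta> have "(\<lambda>k. \<rho> k / of_real (L k) + b k) \<longlonglongrightarrow> 0" by (rule tendsto_0_le)
  from tendsto_diff[OF this lim[of "n - 1"]] show ?thesis by (simp add: b_def)
qed

lemma reflect_poly_normalized:
  fixes p :: "complex poly"
  assumes deg: "degree p = n" and C: "coeff p 0 = C" "C \<noteq> 0"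
  defines "q \<equiv> smult (inverse C) (reflect_poly p)"
  shows "degree q = n" "coeff q i = (if n < i then 0 else coeff p (n - i) / C)"
    and "z \<noteq> 0 \<Longrightarrow> poly q z = z ^ n * poly p (inverse z) / C" "poly q 0 \<noteq> 0"
proof -
  show "degree q = n" using C deg by (simp add: q_def degree_reflect_poly_eq)
  show "coeff q i = (if n < i then 0 else coeff p (n - i) / C)"
    using deg by (simp add: q_def coeff_reflect_poly field_simps)
  show "poly q z = z ^ n * poly p (inverse z) / C" if "z \<noteq> 0"
    using that deg by (simp add: q_def poly_reflect_poly_nz field_simps)
  have "p \<noteq> 0" using C by auto
  then show "poly q 0 \<noteq> 0" using C by (simp add: q_def poly_reflect_poly_0)
qed

text \<open>The reversed polynomial has the reciprocal roots, so the smallest root becomes the largest.\<close>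
lemma min_root_tendsto:
  fixes p :: "nat \<Rightarrow> complex poly" and L :: "nat \<Rightarrow> real" and \<rho> a :: "nat \<Rightarrow> complex"
  assumes n: "n \<ge> 1" and deg: "\<And>k. degree (p k) = n"
    and C: "\<And>k. coeff (p k) 0 = C" "C \<noteq> 0"
    and L: "\<And>k. L k > 0" "filterlim L at_top sequentially"
    and lim: "\<And>i. (\<lambda>k. coeff (p k) i / of_real (L k)) \<longlonglongrightarrow> a i" and a: "a 1 \<noteq> 0"
    and root: "\<And>k. poly (p k) (\<rho> k) = 0"
    and min: "\<And>k z. poly (p k) z = 0 \<Longrightarrow> norm (\<rho> k) \<le> norm z"
  shows "(\<lambda>k. norm (\<rho> k) * L k) \<longlonglongrightarrow> norm C / norm (a 1)"
proof -
  define q where "q k = smult (inverse C) (reflect_poly (p k))" for k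
  note q = reflect_poly_normalized[OF deg C(1) C(2), folded q_def]
  have \<rho>0: "\<rho> k \<noteq> 0" for k
    using root[of k] C by (auto simp: poly_0_coeff_0)
  have "(\<lambda>k. inverse (\<rho> k) / of_real (L k)) \<longlonglongrightarrow> - (if n < n - 1 then 0 else a (n - (n - 1)) / C)"
  proof (rule max_root_tendsto[OF n q(1) _ L])
    show "coeff (q k) n = 1" for k using q(2) C by simp
    show "(\<lambda>k. coeff (q k) i / of_real (L k)) \<longlonglongrightarrow> (if n < i then 0 else a (n - i) / C)" for i
    proof (cases "n < i")
      case False
      have "(\<lambda>k. coeff (p k) (n - i) / of_real (L k) / C) \<longlonglongrightarrow> a (n - i) / C"
        using lim C by (intro tendsto_divide tendsto_const) auto
      then show ?thesis using False unfolding q(2) by (simp add: divide_divide_eq_left mult.commute)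
    qed (simp add: q(2))
    show "(if n < n - 1 then 0 else a (n - (n - 1)) / C) \<noteq> 0" using a C n by simp
    show "poly (q k) (inverse (\<rho> k)) = 0" for k using q(3) \<rho>0 root by simp
    show "norm z \<le> norm (inverse (\<rho> k))" if "poly (q k) z = 0" for k z
    proof -
      have "z \<noteq> 0" using that q(4)[of k] by auto
      then have "norm (\<rho> k) \<le> norm (inverse z)" using that q(3) C min by simp
      from le_imp_inverse_le[OF this] show ?thesis using \<open>z \<noteq> 0\<close> \<rho>0[of k] by (simp add: norm_inverse)
    qed
  qed
  then have "(\<lambda>k. inverse (\<rho> k) / of_real (L k)) \<longlonglongrightarrow> - (a 1 / C)"
    using n by (cases n) auto
  then have "(\<lambda>k. inverse (norm (inverse (\<rho> k) / of_real (L k)))) \<longlonglongrightarrow> inverse (norm (- (a 1 / C)))"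
    using a C by (intro tendsto_inverse tendsto_norm) auto
  moreover have "inverse (norm (inverse (\<rho> k) / of_real (L k))) = norm (\<rho> k) * L k" for k
  proof -
    have "norm (inverse (\<rho> k) / of_real (L k)) = inverse (norm (\<rho> k) * L k)"
      using L(1)[of k] by (simp add: norm_mult norm_divide norm_inverse divide_inverse mult.commute)
    then show ?thesis by simp
  qed
  ultimately show ?thesis by (simp add: norm_divide)
qed

context
  fixes \<Delta> :: "'a set set" and d :: nat
  assumes sc: "simplicial_complex \<Delta>" and fin: "finite \<Delta>" and top: "max_face_card \<Delta> (Suc d)"
begin

lemma coeff_h_poly_bary_iter:
  "coeff (h_poly (bary_iter \<Delta> k)) t =
    (\<Sum>j\<le>Suc d. of_nat (face_count (bary_iter \<Delta> k) j) * coeff ([:-1, 1:] ^ (Suc d - j)) t)"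
proof -
  have Max: "Max (card ` bary_iter \<Delta> k) = Suc d"
    using bary_iter_complex[OF sc fin top] by (auto intro: Max_card_eq)
  have coeff_of_nat_mult: "coeff (of_nat n * p) t = of_nat n * coeff p t" for n and p :: "complex poly"
    by (induction n) (simp_all add: algebra_simps)
  show ?thesis unfolding h_poly_def Let_def Max coeff_sum coeff_of_nat_mult ..
qed

lemma degree_h_poly_bary_iter: "degree (h_poly (bary_iter \<Delta> k)) = Suc d"
  and lead_coeff_h_poly_bary_iter: "coeff (h_poly (bary_iter \<Delta> k)) (Suc d) = 1"
proof -
  have "coeff (h_poly (bary_iter \<Delta> k)) (Suc d) = (\<Sum>j\<le>Suc d. if j = 0 then 1 else 0)"
    unfolding coeff_h_poly_bary_iter
    by (intro sum.cong refl) (auto simp: coeff_x_minus_1_power face_count_bary_iter_empty[OF sc fin top])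
  then show lead: "coeff (h_poly (bary_iter \<Delta> k)) (Suc d) = 1" by simp
  have "coeff (h_poly (bary_iter \<Delta> k)) i = 0" if "i > Suc d" for i
    using that unfolding coeff_h_poly_bary_iter by (intro sum.neutral) (auto simp: coeff_x_minus_1_power)
  then show "degree (h_poly (bary_iter \<Delta> k)) = Suc d"
    using lead by (intro antisym degree_le le_degree) auto
qed

lemma coeff_0_h_poly_bary_iter:
  "coeff (h_poly (bary_iter \<Delta> k)) 0 = of_int ((-1)^d * red_euler_char \<Delta>)"
proof -
  have "coeff (h_poly (bary_iter \<Delta> k)) 0 =
      of_int (\<Sum>j\<le>Suc d. (-1)^(Suc d) * ((-1)^j * int (face_count (bary_iter \<Delta> k) j)))"
    unfolding coeff_h_poly_bary_iter
    by (simp add: coeff_x_minus_1_power neg_one_power_diff algebra_simps)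
  also have "\<dots> = of_int ((-1)^(Suc d) * - red_euler_char \<Delta>)"
    unfolding sum_distrib_left[symmetric] alternating_face_count_bary_iter[OF sc fin top]
      red_euler_char_eq_alternating_sum[OF fin top] by simp
  finally show ?thesis by simp
qed

lemma h_poly_bary_iter_coeff_limit:
  assumes "d \<ge> 1"
  shows "(\<lambda>k. coeff (h_poly (bary_iter \<Delta> k)) t / of_real (fact (Suc d) ^ k)) \<longlonglongrightarrow>
    of_real (real (face_count \<Delta> (Suc d)) * coeff (Hpoly d) t)"
proof -
  have "(\<lambda>k. \<Sum>j\<le>Suc d. real (face_count (bary_iter \<Delta> k) j) / fact (Suc d) ^ k *
      coeff ([:-1, 1:] ^ (Suc d - j)) t) \<longlonglongrightarrow>
      (\<Sum>j\<le>Suc d. real (face_count \<Delta> (Suc d)) * Fvec d j * coeff ([:-1, 1:] ^ (Suc d - j)) t)"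
    by (intro tendsto_intros face_count_bary_iter_limit[OF sc fin top assms]) auto
  also have "(\<Sum>j\<le>Suc d. real (face_count \<Delta> (Suc d)) * Fvec d j * coeff ([:-1, 1:] ^ (Suc d - j)) t) =
      real (face_count \<Delta> (Suc d)) * coeff (Hpoly d) t"
    unfolding coeff_Hpoly sum_distrib_left by (simp add: mult.assoc)
  finally have "(\<lambda>k. complex_of_real (\<Sum>j\<le>Suc d. real (face_count (bary_iter \<Delta> k) j) / fact (Suc d) ^ k *
      coeff ([:-1, 1:] ^ (Suc d - j)) t)) \<longlonglongrightarrow> of_real (real (face_count \<Delta> (Suc d)) * coeff (Hpoly d) t)"
    by (rule tendsto_of_real)
  moreover have "complex_of_real (\<Sum>j\<le>Suc d. real (face_count (bary_iter \<Delta> k) j) / fact (Suc d) ^ k *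
      coeff ([:-1, 1:] ^ (Suc d - j)) t) =
      coeff (h_poly (bary_iter \<Delta> k)) t / of_real (fact (Suc d) ^ k)" for k
    unfolding coeff_h_poly_bary_iter sum_divide_distrib of_real_sum
  proof (intro sum.cong refl)
    fix j
    have "coeff ([:-1, 1:] ^ n :: complex poly) t = of_real (coeff ([:-1, 1:] ^ n :: real poly) t)" for n
      by (simp add: coeff_x_minus_1_power)
    then show "complex_of_real (real (face_count (bary_iter \<Delta> k) j) / fact (Suc d) ^ k *
        coeff ([:-1, 1:] ^ (Suc d - j)) t) =
        of_nat (face_count (bary_iter \<Delta> k) j) * coeff ([:-1, 1:] ^ (Suc d - j)) t / of_real (fact (Suc d) ^ k)"
      by (simp add: field_simps)
  qed
  ultimately show ?thesis by simp
qed

end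

context
  fixes \<Delta> :: "'a set set" and d :: nat and \<rho> :: "nat \<Rightarrow> complex"
  assumes sc: "simplicial_complex \<Delta>" and fin: "finite \<Delta>" and top: "max_face_card \<Delta> (Suc d)"
    and d1: "d \<ge> 1" and root: "\<And>k. poly (h_poly (bary_iter \<Delta> k)) (\<rho> k) = 0"
begin

lemma max_root_h_poly_bary_iter_asymp:
  assumes "\<And>k z. poly (h_poly (bary_iter \<Delta> k)) z = 0 \<Longrightarrow> norm z \<le> norm (\<rho> k)"
  shows "\<rho> \<sim>[sequentially] (\<lambda>k. complex_of_real (- Hnum 1 d * real (face_count \<Delta> (Suc d)) * fact (Suc d) ^ k))"
proof (rule asymp_equivI')
  define c where "c = Hnum 1 d * real (face_count \<Delta> (Suc d))"
  have c: "c > 0" using Hpoly_subleading_coeffs[OF d1] face_count_pos_of_max_face_card[OF fin top] by (simp add: c_def)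
  have "(\<lambda>k. \<rho> k / of_real (fact (Suc d) ^ k)) \<longlonglongrightarrow> - complex_of_real (real (face_count \<Delta> (Suc d)) * coeff (Hpoly d) (Suc d - 1))"
    using fact_power_scale[OF d1] by (intro max_root_tendsto[where p = "\<lambda>k. h_poly (bary_iter \<Delta> k)"] root assms
        h_poly_bary_iter_coeff_limit[OF sc fin top d1] degree_h_poly_bary_iter[OF sc fin top]
        lead_coeff_h_poly_bary_iter[OF sc fin top]) (use c Hpoly_subleading_coeffs[OF d1] face_count_pos_of_max_face_card[OF fin top] in \<open>auto simp: c_def\<close>)
  then have "(\<lambda>k. \<rho> k / of_real (fact (Suc d) ^ k) / - complex_of_real c) \<longlonglongrightarrow>
      - complex_of_real c / - complex_of_real c"
    using Hpoly_subleading_coeffs[OF d1] face_count_pos_of_max_face_card[OF fin top]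
    by (intro tendsto_divide tendsto_const) (auto simp: c_def mult.commute)
  moreover have "(\<lambda>k. \<rho> k / of_real (fact (Suc d) ^ k) / - complex_of_real c) =
      (\<lambda>k. \<rho> k / complex_of_real (- Hnum 1 d * real (face_count \<Delta> (Suc d)) * fact (Suc d) ^ k))"
    by (rule ext) (simp add: c_def divide_divide_eq_left mult_ac)
  ultimately show "(\<lambda>k. \<rho> k / complex_of_real (- Hnum 1 d * real (face_count \<Delta> (Suc d)) * fact (Suc d) ^ k))
      \<longlonglongrightarrow> 1"
    using c by simp
qed

lemma min_root_h_poly_bary_iter_asymp:
  assumes "\<And>k z. poly (h_poly (bary_iter \<Delta> k)) z = 0 \<Longrightarrow> norm (\<rho> k) \<le> norm z"
  shows "(\<lambda>k. real_of_int \<bar>red_euler_char \<Delta>\<bar>) \<sim>[sequentially]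
    (\<lambda>k. Hnum 1 d * real (face_count \<Delta> (Suc d)) * norm (\<rho> k) * fact (Suc d) ^ k)"
proof (cases "red_euler_char \<Delta> = 0")
  case True
  then have "\<rho> k = 0" for k
    using assms[of k 0] coeff_0_h_poly_bary_iter[OF sc fin top, of k] by (simp add: poly_0_coeff_0)
  then show ?thesis using True by simp
next
  case False
  define c where "c = Hnum 1 d * real (face_count \<Delta> (Suc d))"
  have c: "c > 0" using Hpoly_subleading_coeffs[OF d1] face_count_pos_of_max_face_card[OF fin top] by (simp add: c_def)
  have "(\<lambda>k. norm (\<rho> k) * fact (Suc d) ^ k) \<longlonglongrightarrow>
      norm (of_int ((-1)^d * red_euler_char \<Delta>) :: complex) / norm (complex_of_real (real (face_count \<Delta> (Suc d)) * coeff (Hpoly d) 1))"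
    using fact_power_scale[OF d1] False
    by (intro min_root_tendsto[where p = "\<lambda>k. h_poly (bary_iter \<Delta> k)" and n = "Suc d"] root assms
        h_poly_bary_iter_coeff_limit[OF sc fin top d1] degree_h_poly_bary_iter[OF sc fin top]
        coeff_0_h_poly_bary_iter[OF sc fin top]) (use c Hpoly_subleading_coeffs[OF d1] face_count_pos_of_max_face_card[OF fin top] in \<open>auto simp: c_def\<close>)
  also have "norm (of_int ((-1)^d * red_euler_char \<Delta>) :: complex) /
      norm (complex_of_real (real (face_count \<Delta> (Suc d)) * coeff (Hpoly d) 1)) =
      real_of_int \<bar>red_euler_char \<Delta>\<bar> / c"
    using c Hpoly_subleading_coeffs[OF d1] by (simp add: c_def norm_mult norm_power mult.commute)
  finally have "(\<lambda>k. c * (norm (\<rho> k) * fact (Suc d) ^ k)) \<longlonglongrightarrow> c * (real_of_int \<bar>red_euler_char \<Delta>\<bar> / c)"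
    by (intro tendsto_mult_left)
  then have "(\<lambda>k. c * norm (\<rho> k) * fact (Suc d) ^ k) \<sim>[sequentially] (\<lambda>k. real_of_int \<bar>red_euler_char \<Delta>\<bar>)"
    using c False by (intro tendsto_imp_asymp_equiv_const) (simp_all add: mult.assoc)
  then show ?thesis by (simp add: asymp_equiv_sym c_def)
qed

end

theorem theorem1p2:
  fixes \<Delta> :: "'a set set" and d :: nat and \<rho>inf \<rho>0 :: "nat \<Rightarrow> complex"
  assumes "simplicial_complex \<Delta>" and "finite \<Delta>"
    and "cdim \<Delta> = int d" and "d \<ge> 1"
    and "\<And>k. poly (h_poly (bary_iter \<Delta> k)) (\<rho>inf k) = 0"
    and "\<And>k z. poly (h_poly (bary_iter \<Delta> k)) z = 0 \<Longrightarrow> norm z \<le> norm (\<rho>inf k)"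
    and "\<And>k. poly (h_poly (bary_iter \<Delta> k)) (\<rho>0 k) = 0"
    and "\<And>k z. poly (h_poly (bary_iter \<Delta> k)) z = 0 \<Longrightarrow> norm (\<rho>0 k) \<le> norm z"
  shows "\<rho>inf \<sim>[sequentially]
           (\<lambda>k. complex_of_real (- Hnum 1 d * real (fvec \<Delta> (int d)) * fact (d + 1) ^ k)) \<and>
         (\<lambda>k. real_of_int \<bar>red_euler_char \<Delta>\<bar>) \<sim>[sequentially]
           (\<lambda>k. Hnum 1 d * real (fvec \<Delta> (int d)) * norm (\<rho>0 k) * fact (d + 1) ^ k)"
proof -
  have top: "max_face_card \<Delta> (Suc d)"
    using assms(1-3) by (rule max_face_card_of_cdim)
  have "nat (int d + 1) = Suc d" by simp
  then have "fvec \<Delta> (int d) = face_count \<Delta> (Suc d)" by (simp add: fvec_def)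
  then show ?thesis
    using max_root_h_poly_bary_iter_asymp[OF assms(1,2) top assms(4,5,6)]
      min_root_h_poly_bary_iter_asymp[OF assms(1,2) top assms(4,7,8)] by simp
qed

end
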